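(* Let $\epsilon\in(0,1/e]$, $p_v,p_e\in(0,1]$, let $G=(V,E)$ be a graph with nonnegative edge weights $w_e$, and let $x$ be the fractional matching produced by the non-crucial edge procedure (context). Then $$\mathbb{E}\Big[\sum_{e\in N}w_e\,x_e\Big]\ \ge\ (1-10\epsilon)\,\varphi(N).$$
   Context: Realization model: given $p_v,p_e\in(0,1]$ and $G=(V,E)$ with weights $w_e\ge0$, a realization $\mathcal{G}=(\mathcal{V},\mathcal{E})$ keeps each vertex independently with probability $p_v$ and each edge $(u,v)$ independently with probability $p_e$ provided both $u,v$ are kept. Fix a deterministic algorithm computing a maximum-weight matching $M(H)$. $q_e:=\Pr[e\in M(\mathcal{G})]$. For $X\subseteq E$, $\varphi(X):=\sum_{e\in X}w_eq_e$. $\tau=\frac{\epsilon^3p_v^2p_e}{20\log(1/\epsilon)}$, $R=\frac{2000\log(1/\epsilon)\log(1/(\epsilon p_v^2p_e))}{\epsilon^4p_v^2p_e}$. $N=\{e\in E:q_e<\tau\}$; $q_v^N:=\sum_{e\in N,\,e\ni v}q_e$. Algorithm 1: for $r=1,\dots,R$ draw an independent realization $\mathcal{G}_r$ and put the edges of $M(\mathcal{G}_r)$ into $Q=(V,E_Q)$; $f_e:=$ (number of $r$ with $e\in M(\mathcal{G}_r)$)$/R$. The realization $\mathcal{G}$ is independent of the algorithm's samples; $\mathcal{E}_Q=E_Q\cap\mathcal{E}$. Non-crucial edge procedure: (1) for $e\in\mathcal{E}_Q\cap N$ set $\tilde x_e=\min\{f_e/(p_v^2p_e),\,2\tau/(p_v^2p_e)\}$,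 and $\tilde x_e=0$ otherwise; let $\tilde x_v=\sum_{e\ni v}\tilde x_e$. (2) For each edge $e$ set $s_e=\min\big(\{1\}\cup\{\max\{q_v^N,\epsilon\}/(p_v\tilde x_v): v\in e\}\big)$. (3) Set $x_e=s_e\tilde x_e$. *)

theory Defs
  imports "HOL-Probability.Probability"
begin

text \<open>Graphs: vertex set V :: 'a set, edge set E :: 'a set set, each edge a 2-element set.
A realization is a pair (kept vertices, kept edges).\<close>

type_synonym 'a realz = "'a set \<times> 'a set set"

definition simple_graph :: "'a set \<Rightarrow> 'a set set \<Rightarrow> bool" where
  "simple_graph V E \<longleftrightarrow> finite V \<and> (\<forall>e\<in>E. \<exists>u v. u \<in> V \<and> v \<in> V \<and> u \<noteq> v \<and> e = {u, v})"

definition realization :: "real \<Rightarrow> real \<Rightarrow> 'a set \<Rightarrow> 'a set set \<Rightarrow> 'a realz pmf" where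
  "realization pv pe V E =
     map_pmf (\<lambda>(cv, ce). ({v \<in> V. cv v}, {e \<in> E. (\<forall>v\<in>e. cv v) \<and> ce e}))
       (pair_pmf (Pi_pmf V False (\<lambda>_. bernoulli_pmf pv)) (Pi_pmf E False (\<lambda>_. bernoulli_pmf pe)))"

definition is_matching :: "'a set set \<Rightarrow> bool" where
  "is_matching M \<longleftrightarrow> (\<forall>e\<in>M. \<forall>f\<in>M. e \<noteq> f \<longrightarrow> e \<inter> f = {})"

definition is_max_weight_matching :: "('a set \<Rightarrow> real) \<Rightarrow> 'a realz \<Rightarrow> 'a set set \<Rightarrow> bool" where
  "is_max_weight_matching w H M \<longleftrightarrow>
     M \<subseteq> snd H \<and> is_matching M \<and>
     (\<forall>M'. M' \<subseteq> snd H \<and> is_matching M' \<longrightarrow> sum w M' \<le> sum w M)"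

definition qprob :: "('a realz \<Rightarrow> 'a set set) \<Rightarrow> real \<Rightarrow> real \<Rightarrow> 'a set \<Rightarrow> 'a set set \<Rightarrow> 'a set \<Rightarrow> real" where
  "qprob Alg pv pe V E e = measure_pmf.prob (realization pv pe V E) {H. e \<in> Alg H}"

definition phi :: "('a set \<Rightarrow> real) \<Rightarrow> ('a realz \<Rightarrow> 'a set set) \<Rightarrow> real \<Rightarrow> real \<Rightarrow> 'a set \<Rightarrow> 'a set set \<Rightarrow> 'a set set \<Rightarrow> real" where
  "phi w Alg pv pe V E X = (\<Sum>e\<in>X. w e * qprob Alg pv pe V E e)"

definition tau :: "real \<Rightarrow> real \<Rightarrow> real \<Rightarrow> real" where
  "tau eps pv pe = eps ^ 3 * pv\<^sup>2 * pe / (20 * ln (1 / eps))"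

definition Rrounds :: "real \<Rightarrow> real \<Rightarrow> real \<Rightarrow> nat" where
  "Rrounds eps pv pe =
     nat \<lceil>2000 * ln (1 / eps) * ln (1 / (eps * pv\<^sup>2 * pe)) / (eps ^ 4 * pv\<^sup>2 * pe)\<rceil>"

definition Nset :: "('a realz \<Rightarrow> 'a set set) \<Rightarrow> real \<Rightarrow> real \<Rightarrow> real \<Rightarrow> 'a set \<Rightarrow> 'a set set \<Rightarrow> 'a set set" where
  "Nset Alg eps pv pe V E = {e \<in> E. qprob Alg pv pe V E e < tau eps pv pe}"

definition qN :: "('a realz \<Rightarrow> 'a set set) \<Rightarrow> real \<Rightarrow> real \<Rightarrow> real \<Rightarrow> 'a set \<Rightarrow> 'a set set \<Rightarrow> 'a \<Rightarrow> real" where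
  "qN Alg eps pv pe V E v = (\<Sum>e\<in>{e \<in> Nset Alg eps pv pe V E. v \<in> e}. qprob Alg pv pe V E e)"

definition samples :: "real \<Rightarrow> real \<Rightarrow> real \<Rightarrow> 'a set \<Rightarrow> 'a set set \<Rightarrow> (nat \<Rightarrow> 'a realz) pmf" where
  "samples eps pv pe V E = Pi_pmf {..<Rrounds eps pv pe} ({}, {}) (\<lambda>_. realization pv pe V E)"

definition EQ :: "('a realz \<Rightarrow> 'a set set) \<Rightarrow> real \<Rightarrow> real \<Rightarrow> real \<Rightarrow> (nat \<Rightarrow> 'a realz) \<Rightarrow> 'a set set" where
  "EQ Alg eps pv pe \<sigma> = (\<Union>r<Rrounds eps pv pe. Alg (\<sigma> r))"

definition freq :: "('a realz \<Rightarrow> 'a set set) \<Rightarrow> real \<Rightarrow> real \<Rightarrow> real \<Rightarrow> (nat \<Rightarrow> 'a realz) \<Rightarrow> 'a set \<Rightarrow> real" where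
  "freq Alg eps pv pe \<sigma> e =
     real (card {r \<in> {..<Rrounds eps pv pe}. e \<in> Alg (\<sigma> r)}) / real (Rrounds eps pv pe)"

definition xtilde :: "('a realz \<Rightarrow> 'a set set) \<Rightarrow> real \<Rightarrow> real \<Rightarrow> real \<Rightarrow> 'a set \<Rightarrow> 'a set set
    \<Rightarrow> (nat \<Rightarrow> 'a realz) \<Rightarrow> 'a realz \<Rightarrow> 'a set \<Rightarrow> real" where
  "xtilde Alg eps pv pe V E \<sigma> H e =
     (if e \<in> EQ Alg eps pv pe \<sigma> \<inter> snd H \<inter> Nset Alg eps pv pe V E
      then min (freq Alg eps pv pe \<sigma> e / (pv\<^sup>2 * pe)) (2 * tau eps pv pe / (pv\<^sup>2 * pe))
      else 0)"

definition xtilde_v :: "('a realz \<Rightarrow> 'a set set) \<Rightarrow> real \<Rightarrow> real \<Rightarrow> real \<Rightarrow> 'a set \<Rightarrow> 'a set set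
    \<Rightarrow> (nat \<Rightarrow> 'a realz) \<Rightarrow> 'a realz \<Rightarrow> 'a \<Rightarrow> real" where
  "xtilde_v Alg eps pv pe V E \<sigma> H v = (\<Sum>e\<in>{e \<in> E. v \<in> e}. xtilde Alg eps pv pe V E \<sigma> H e)"

text \<open>Step (2). A vertex with xtilde_v = 0 gives the ratio +infinity, i.e. no constraint.\<close>
definition scale :: "('a realz \<Rightarrow> 'a set set) \<Rightarrow> real \<Rightarrow> real \<Rightarrow> real \<Rightarrow> 'a set \<Rightarrow> 'a set set
    \<Rightarrow> (nat \<Rightarrow> 'a realz) \<Rightarrow> 'a realz \<Rightarrow> 'a set \<Rightarrow> real" where
  "scale Alg eps pv pe V E \<sigma> H e =
     Min ({1} \<union> {max (qN Alg eps pv pe V E v) eps / (pv * xtilde_v Alg eps pv pe V E \<sigma> H v) | v.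
                   v \<in> e \<and> xtilde_v Alg eps pv pe V E \<sigma> H v > 0})"

definition xfrac :: "('a realz \<Rightarrow> 'a set set) \<Rightarrow> real \<Rightarrow> real \<Rightarrow> real \<Rightarrow> 'a set \<Rightarrow> 'a set set
    \<Rightarrow> (nat \<Rightarrow> 'a realz) \<Rightarrow> 'a realz \<Rightarrow> 'a set \<Rightarrow> real" where
  "xfrac Alg eps pv pe V E \<sigma> H e =
     scale Alg eps pv pe V E \<sigma> H e * xtilde Alg eps pv pe V E \<sigma> H e"

end

theory Submission
  imports Defs
begin

text \<open>Fix an edge \<open>e = {v, u}\<close> of \<open>N\<close>. Whenever \<open>e\<close> is realized and \<open>f\<^sub>e \<le> 2\<tau>\<close>, the
  procedure sets \<open>x\<^sub>e = s\<^sub>e f\<^sub>e / (p\<^sub>v\<^sup>2 p\<^sub>e)\<close>, and since the samples are independent of the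
  realization, \<open>E[f\<^sub>e [e realized]] / (p\<^sub>v\<^sup>2 p\<^sub>e) = q\<^sub>e\<close>. The scaling factor \<open>s\<^sub>e\<close> is at least
  \<open>1/(1 + 3\<epsilon>) \<ge> 1 - 3\<epsilon>\<close> unless, in some round where \<open>e\<close> is matched, one of five bad events
  occurs: \<open>f\<^sub>e > 2\<tau>\<close>; for an endpoint \<open>v\<close>, the sampled mass \<open>F\<^sub>v\<close> of the edges of \<open>N\<close> at \<open>v\<close>
  exceeds \<open>(1 + \<epsilon>) max(q\<^sub>v\<^sup>N, \<epsilon>)\<close>; or \<open>F\<^sub>v\<close> is small but the realized load \<open>p\<^sub>v x\<^sub>v\<close> exceeds
  \<open>(1 + 3\<epsilon>) max(q\<^sub>v\<^sup>N, \<epsilon>)\<close>. The first three are Chernoff bounds over the rounds other than the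
  one matching \<open>e\<close>; the last is an exponential-moment bound over the independent vertex and edge
  coins of the realization, the neighbours of \<open>v\<close> contributing independent factors. Each event
  costs at most \<open>\<epsilon> p\<^sub>v\<^sup>2 p\<^sub>e q\<^sub>e\<close>, so \<open>E[x\<^sub>e] \<ge> (1 - 3\<epsilon>)(1 - 5\<epsilon>) q\<^sub>e \<ge> (1 - 10\<epsilon>) q\<^sub>e\<close>.\<close>

lemma integrable_measure_pmf_bounded:
  fixes f :: "'a \<Rightarrow> real"
  assumes "\<And>x. x \<in> set_pmf p \<Longrightarrow> \<bar>f x\<bar> \<le> B"
  shows "integrable (measure_pmf p) f"
  by (rule measure_pmf.integrable_const_bound[where B=B]) (auto intro!: AE_pmfI assms)

lemma expectation_mono_bounded:
  fixes f g :: "'a \<Rightarrow> real"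
  assumes "\<And>x. x \<in> set_pmf p \<Longrightarrow> f x \<le> g x"
    and "\<And>x. x \<in> set_pmf p \<Longrightarrow> \<bar>f x\<bar> \<le> B" "\<And>x. x \<in> set_pmf p \<Longrightarrow> \<bar>g x\<bar> \<le> B'"
  shows "measure_pmf.expectation p f \<le> measure_pmf.expectation p g"
  by (rule integral_mono_AE) (auto intro!: AE_pmfI assms integrable_measure_pmf_bounded)

lemma expectation_pair_pmf_iterated:
  fixes f :: "'a \<times> 'b \<Rightarrow> real"
  assumes nonneg: "\<And>x. 0 \<le> f x" and bounded: "\<And>x. f x \<le> B"
  shows "measure_pmf.expectation (pair_pmf p q) f =
         measure_pmf.expectation p (\<lambda>a. measure_pmf.expectation q (\<lambda>b. f (a, b)))"
proof -
  have int_f: "integrable (measure_pmf (pair_pmf p q)) f"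
    by (rule integrable_measure_pmf_bounded[of _ _ B]) (use nonneg bounded in auto)
  have int_section: "integrable (measure_pmf q) (\<lambda>b. f (a, b))" for a
    by (rule integrable_measure_pmf_bounded[of _ _ B]) (use nonneg bounded in auto)
  have section_nonneg: "0 \<le> measure_pmf.expectation q (\<lambda>b. f (a, b))" for a
    by (intro Bochner_Integration.integral_nonneg nonneg)
  have section_bounded: "measure_pmf.expectation q (\<lambda>b. f (a, b)) \<le> B" for a
    using integral_mono[OF int_section, of "\<lambda>_. B"] bounded by simp
  have int_iterated: "integrable (measure_pmf p) (\<lambda>a. measure_pmf.expectation q (\<lambda>b. f (a, b)))"
    by (rule integrable_measure_pmf_bounded[of _ _ B]) (use section_nonneg section_bounded in auto)
  have "ennreal (measure_pmf.expectation (pair_pmf p q) f) = (\<integral>\<^sup>+x. ennreal (f x) \<partial>pair_pmf p q)"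
    by (rule nn_integral_eq_integral[symmetric]) (use int_f nonneg in auto)
  also have "\<dots> = (\<integral>\<^sup>+a. \<integral>\<^sup>+b. ennreal (f (a, b)) \<partial>q \<partial>p)"
    by (rule nn_integral_pair_pmf')
  also have "\<dots> = (\<integral>\<^sup>+a. ennreal (measure_pmf.expectation q (\<lambda>b. f (a, b))) \<partial>p)"
    by (intro nn_integral_cong nn_integral_eq_integral) (use int_section nonneg in auto)
  also have "\<dots> = ennreal (measure_pmf.expectation p (\<lambda>a. measure_pmf.expectation q (\<lambda>b. f (a, b))))"
    by (rule nn_integral_eq_integral) (use int_iterated section_nonneg in auto)
  finally show ?thesis
    by (subst (asm) ennreal_inj) (auto intro!: Bochner_Integration.integral_nonneg nonneg section_nonneg)
qed

lemma expectation_pair_pmf_mult: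
  fixes g :: "'a \<Rightarrow> real" and h :: "'b \<Rightarrow> real"
  assumes "\<And>x. 0 \<le> g x" "\<And>x. g x \<le> B" "\<And>y. 0 \<le> h y" "\<And>y. h y \<le> B'"
  shows "measure_pmf.expectation (pair_pmf p q) (\<lambda>x. g (fst x) * h (snd x)) =
         measure_pmf.expectation p g * measure_pmf.expectation q h"
proof -
  have "0 \<le> B" using assms(1,2)[of undefined] by linarith
  have "measure_pmf.expectation (pair_pmf p q) (\<lambda>x. g (fst x) * h (snd x)) =
        measure_pmf.expectation p (\<lambda>a. measure_pmf.expectation q (\<lambda>b. g (fst (a, b)) * h (snd (a, b))))"
    by (rule expectation_pair_pmf_iterated[where B="B * B'"])
       (use assms \<open>0 \<le> B\<close> in \<open>auto intro!: mult_mono\<close>)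
  then show ?thesis by simp
qed

lemma integrable_measure_pmf_finite_type [simp]:
  "integrable (measure_pmf (p :: 'a :: finite pmf)) (f :: 'a \<Rightarrow> real)"
  by (simp add: integrable_measure_pmf_finite)

lemma expectation_Pi_pmf_prod_reindex:
  fixes g :: "'z \<Rightarrow> 'b \<Rightarrow> real"
  assumes "finite A" "finite Z" "inj_on \<iota> Z" "\<iota> ` Z \<subseteq> A"
    and integrable: "\<And>z. z \<in> Z \<Longrightarrow> integrable (measure_pmf (p (\<iota> z))) (g z)"
    and nonneg: "\<And>z y. z \<in> Z \<Longrightarrow> 0 \<le> g z y"
  shows "measure_pmf.expectation (Pi_pmf A d p) (\<lambda>h. \<Prod>z\<in>Z. g z (h (\<iota> z))) =
         (\<Prod>z\<in>Z. measure_pmf.expectation (p (\<iota> z)) (g z))"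
proof -
  define f where "f = (\<lambda>i. if i \<in> \<iota> ` Z then g (inv_into Z \<iota> i) else (\<lambda>_. 1))"
  have f_iota: "f (\<iota> z) = g z" if "z \<in> Z" for z
    using that assms(3) by (simp add: f_def)
  have reindex: "(\<Prod>i\<in>A. F i) = (\<Prod>z\<in>Z. F (\<iota> z))" if "\<And>i. i \<notin> \<iota> ` Z \<Longrightarrow> F i = 1"
    for F :: "'a \<Rightarrow> real"
  proof -
    have "(\<Prod>i\<in>A. F i) = (\<Prod>i\<in>\<iota> ` Z. F i)"
      using assms(1,4) that by (intro prod.mono_neutral_right) auto
    also have "\<dots> = (\<Prod>z\<in>Z. F (\<iota> z))"
      using assms(3) by (simp add: prod.reindex)
    finally show ?thesis .
  qed
  have "measure_pmf.expectation (Pi_pmf A d p) (\<lambda>h. \<Prod>i\<in>A. f i (h i)) =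
        (\<Prod>i\<in>A. measure_pmf.expectation (p i) (f i))"
  proof (rule expectation_prod_Pi_pmf[OF assms(1)])
    fix i
    show "integrable (measure_pmf (p i)) (f i)"
    proof (cases "i \<in> \<iota> ` Z")
      case True
      then obtain z where "z \<in> Z" "i = \<iota> z" by blast
      then show ?thesis using integrable f_iota by simp
    qed (simp add: f_def)
    show "0 \<le> f i y" for y
      using nonneg inv_into_into[of i \<iota> Z] by (simp add: f_def)
  qed
  also have "(\<lambda>h. \<Prod>i\<in>A. f i (h i)) = (\<lambda>h. \<Prod>z\<in>Z. g z (h (\<iota> z)))"
    by (intro ext, subst reindex) (auto simp: f_def inv_into_f_f[OF assms(3)] intro!: prod.cong)
  also have "(\<Prod>i\<in>A. measure_pmf.expectation (p i) (f i)) =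
             (\<Prod>z\<in>Z. measure_pmf.expectation (p (\<iota> z)) (g z))"
    by (subst reindex) (auto simp: f_def inv_into_f_f[OF assms(3)] intro!: prod.cong)
  finally show ?thesis .
qed

lemma expectation_Pi_pmf_split:
  fixes \<alpha> :: "'b \<Rightarrow> real" and \<beta> :: "('i \<Rightarrow> 'b) \<Rightarrow> real"
  assumes "finite I" "r \<in> I"
    and \<beta>_indep: "\<And>\<sigma> y. \<beta> (\<sigma>(r := y)) = \<beta> \<sigma>"
    and "\<And>x. 0 \<le> \<alpha> x" "\<And>x. \<alpha> x \<le> A" "\<And>x. 0 \<le> \<beta> x" "\<And>x. \<beta> x \<le> B"
  shows "measure_pmf.expectation (Pi_pmf I d p) (\<lambda>\<sigma>. \<alpha> (\<sigma> r) * \<beta> \<sigma>) =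
         measure_pmf.expectation (p r) \<alpha> * measure_pmf.expectation (Pi_pmf (I - {r}) d p) \<beta>"
proof -
  have "Pi_pmf I d p = Pi_pmf (insert r (I - {r})) d p"
    using assms(2) by (simp add: insert_absorb)
  also have "\<dots> = map_pmf (\<lambda>(y, f). f(r := y)) (pair_pmf (p r) (Pi_pmf (I - {r}) d p))"
    by (rule Pi_pmf_insert) (use assms(1) in auto)
  finally show ?thesis
    using expectation_pair_pmf_mult[of \<alpha> A \<beta> B "p r" "Pi_pmf (I - {r}) d p"] assms(4-)
    by (simp add: case_prod_beta \<beta>_indep)
qed

lemma exp_mult_le_chord:
  fixes x l :: real
  assumes "0 \<le> x" "x \<le> 1"
  shows "exp (l * x) \<le> 1 + (exp l - 1) * x"
  using convex_onD[OF exp_convex, of x 0 l] assms by (simp add: algebra_simps)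

lemma prod_one_plus_le_exp_sum:
  fixes a :: "'z \<Rightarrow> real"
  assumes "finite Z" "\<And>z. z \<in> Z \<Longrightarrow> 0 \<le> a z"
  shows "(\<Prod>z\<in>Z. 1 + a z) \<le> exp (\<Sum>z\<in>Z. a z)"
proof -
  have "(\<Prod>z\<in>Z. 1 + a z) \<le> (\<Prod>z\<in>Z. exp (a z))"
    using assms(2) by (intro prod_mono) (auto intro: exp_ge_add_one_self add_nonneg_nonneg)
  also have "\<dots> = exp (\<Sum>z\<in>Z. a z)" by (simp add: exp_sum assms(1))
  finally show ?thesis .
qed

lemma expectation_exp_mult_le:
  fixes g :: "'b \<Rightarrow> real"
  assumes g01: "\<And>x. x \<in> set_pmf p \<Longrightarrow> 0 \<le> g x \<and> g x \<le> 1" and "0 \<le> l"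
  shows "measure_pmf.expectation p (\<lambda>x. exp (l * g x)) \<le> exp ((exp l - 1) * measure_pmf.expectation p g)"
proof -
  have int_g: "integrable (measure_pmf p) g"
    using g01 by (intro integrable_measure_pmf_bounded[where B=1]) auto
  have "measure_pmf.expectation p (\<lambda>x. exp (l * g x)) \<le>
        measure_pmf.expectation p (\<lambda>x. 1 + (exp l - 1) * g x)"
  proof (rule expectation_mono_bounded[where B="exp l" and B'="1 + \<bar>exp l - 1\<bar>"])
    fix x assume x: "x \<in> set_pmf p"
    show "exp (l * g x) \<le> 1 + (exp l - 1) * g x"
      using g01[OF x] by (intro exp_mult_le_chord) auto
    show "\<bar>exp (l * g x)\<bar> \<le> exp l"
      using g01[OF x] \<open>0 \<le> l\<close> by (auto simp: mult_left_le)
    have "\<bar>(exp l - 1) * g x\<bar> \<le> \<bar>exp l - 1\<bar>"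
      using g01[OF x] by (auto simp: abs_mult intro: mult_left_le)
    then show "\<bar>1 + (exp l - 1) * g x\<bar> \<le> 1 + \<bar>exp l - 1\<bar>" by linarith
  qed
  also have "\<dots> = 1 + (exp l - 1) * measure_pmf.expectation p g"
    using int_g by (simp add: Bochner_Integration.integral_add)
  also have "\<dots> \<le> exp ((exp l - 1) * measure_pmf.expectation p g)"
    by (rule exp_ge_add_one_self)
  finally show ?thesis .
qed

lemma chernoff_Pi_pmf:
  fixes g :: "'b \<Rightarrow> real"
  assumes fin: "finite I"
    and g01: "\<And>i x. i \<in> I \<Longrightarrow> x \<in> set_pmf (p i) \<Longrightarrow> 0 \<le> g x \<and> g x \<le> 1"
    and "0 \<le> l"
  shows "measure_pmf.prob (Pi_pmf I d p) {\<sigma>. t \<le> (\<Sum>i\<in>I. g (\<sigma> i))}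
         \<le> exp (- l * t + (exp l - 1) * (\<Sum>i\<in>I. measure_pmf.expectation (p i) g))"
proof -
  let ?P = "Pi_pmf I d p"
  let ?S = "\<lambda>\<sigma>. \<Sum>i\<in>I. g (\<sigma> i)"
  have supp: "\<sigma> i \<in> set_pmf (p i)" if "\<sigma> \<in> set_pmf ?P" "i \<in> I" for \<sigma> i
    using set_Pi_pmf_subset'[OF fin, of d p] that by (auto simp: PiE_dflt_def)
  have sum_bounds: "0 \<le> ?S \<sigma> \<and> ?S \<sigma> \<le> card I" if "\<sigma> \<in> set_pmf ?P" for \<sigma>
    using sum_mono[of I "\<lambda>i. g (\<sigma> i)" "\<lambda>_. 1"] g01 supp[OF that]
    by (auto intro!: sum_nonneg)
  have exp_bounds: "0 \<le> exp (l * g x) \<and> exp (l * g x) \<le> exp l" if "i \<in> I" "x \<in> set_pmf (p i)" for i x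
    using g01[OF that] \<open>0 \<le> l\<close> by (auto simp: mult_left_le)
  have "measure_pmf.prob ?P {\<sigma>. t \<le> ?S \<sigma>} = measure_pmf.expectation ?P (indicator {\<sigma>. t \<le> ?S \<sigma>})"
    by simp
  also have "\<dots> \<le> measure_pmf.expectation ?P (\<lambda>\<sigma>. exp (- l * t) * (\<Prod>i\<in>I. exp (l * g (\<sigma> i))))"
  proof (rule expectation_mono_bounded[where B=1 and B'="exp (l * (card I + \<bar>t\<bar>))"])
    fix \<sigma> assume \<sigma>: "\<sigma> \<in> set_pmf ?P"
    have markov: "exp (- l * t) * (\<Prod>i\<in>I. exp (l * g (\<sigma> i))) = exp (l * (?S \<sigma> - t))"
      by (simp add: fin exp_sum[symmetric] exp_add[symmetric] sum_distrib_left right_diff_distrib)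
    show "indicator {\<sigma>. t \<le> ?S \<sigma>} \<sigma> \<le> exp (- l * t) * (\<Prod>i\<in>I. exp (l * g (\<sigma> i)))"
      unfolding markov using \<open>0 \<le> l\<close> by (auto simp: indicator_def)
    show "\<bar>indicator {\<sigma>. t \<le> ?S \<sigma>} \<sigma>\<bar> \<le> (1::real)" by (auto simp: indicator_def)
    show "\<bar>exp (- l * t) * (\<Prod>i\<in>I. exp (l * g (\<sigma> i)))\<bar> \<le> exp (l * (card I + \<bar>t\<bar>))"
      unfolding markov using sum_bounds[OF \<sigma>] \<open>0 \<le> l\<close> by (auto intro!: mult_left_mono)
  qed
  also have "\<dots> = exp (- l * t) * (\<Prod>i\<in>I. measure_pmf.expectation (p i) (\<lambda>x. exp (l * g x)))"
    by (subst integral_mult_right_zero, subst expectation_prod_Pi_pmf[OF fin])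
       (auto intro!: integrable_measure_pmf_bounded[where B="exp l"] dest: exp_bounds)
  also have "\<dots> \<le> exp (- l * t) * (\<Prod>i\<in>I. exp ((exp l - 1) * measure_pmf.expectation (p i) g))"
    using g01 \<open>0 \<le> l\<close>
    by (intro mult_left_mono prod_mono conjI expectation_exp_mult_le Bochner_Integration.integral_nonneg)
       auto
  also have "\<dots> = exp (- l * t + (exp l - 1) * (\<Sum>i\<in>I. measure_pmf.expectation (p i) g))"
    by (simp add: fin exp_sum[symmetric] exp_add[symmetric] sum_distrib_left)
  finally show ?thesis .
qed

lemma exp_half_minus_le:
  fixes eps y :: real
  assumes "0 < eps" "25 / eps \<le> y"
  shows "exp (1/2 - y) \<le> eps"
proof -
  have "0 < y" using assms by (smt (verit) divide_pos_pos)
  have "exp (1/2 - y) = exp (1/2) / exp y" by (simp add: exp_diff)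
  also have "\<dots> \<le> (7/4) / (1 + y)"
    using exp_bound[of "1/2::real"] exp_ge_add_one_self[of y] \<open>0 < y\<close>
    by (intro frac_le) (auto simp: power2_eq_square)
  also have "\<dots> \<le> (7/4) / y" using \<open>0 < y\<close> by (intro divide_left_mono) auto
  also have "\<dots> \<le> eps" using assms \<open>0 < y\<close> by (simp add: field_simps)
  finally show ?thesis .
qed

lemma card_edges_at_matching_le_1:
  assumes "is_matching M" "finite M"
  shows "card {e\<in>M. v \<in> e} \<le> 1"
  using assms card_le_Suc0_iff_eq[of "{e\<in>M. v \<in> e}"] unfolding is_matching_def by auto

lemma inj_on_doubleton: "inj_on (\<lambda>z. {v, z}) A"
  by (auto simp: inj_on_def doubleton_eq_iff)

lemma exp_load_exponent_le:
  fixes eps K :: real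
  assumes "0 < eps" "eps \<le> 1/2" "10 * ln (1 / eps) / eps\<^sup>2 \<le> K"
  shows "exp (eps/2 + K * ((exp (eps/2) - 1) * (1 + eps) - eps/2 * (1 + 3 * eps))) \<le> eps"
proof -
  define L where "L = ln (1 / eps)"
  have "0 \<le> L" unfolding L_def using assms(1,2) by simp
  have "exp (eps/2) - 1 \<le> eps/2 + (eps/2)\<^sup>2"
    using exp_bound[of "eps/2"] assms(1,2) by simp
  then have "(exp (eps/2) - 1) * (1 + eps) - eps/2 * (1 + 3 * eps)
             \<le> (eps/2 + (eps/2)\<^sup>2) * (1 + eps) - eps/2 * (1 + 3 * eps)"
    using assms(1) by (simp add: mult_right_mono)
  also have "\<dots> = - eps\<^sup>2 / 2 - eps\<^sup>2 * (1 - eps) / 4"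
    by (simp add: field_simps power2_eq_square)
  also have "\<dots> \<le> - eps\<^sup>2 / 2"
    using assms(2) by simp
  finally have coef: "(exp (eps/2) - 1) * (1 + eps) - eps/2 * (1 + 3 * eps) \<le> - eps\<^sup>2 / 2" .
  have "0 \<le> K" using assms(3) \<open>0 \<le> L\<close> L_def by (smt (verit) divide_nonneg_nonneg zero_le_power2)
  then have "K * ((exp (eps/2) - 1) * (1 + eps) - eps/2 * (1 + 3 * eps)) \<le> K * (- eps\<^sup>2 / 2)"
    using coef by (intro mult_left_mono)
  also have "\<dots> \<le> 10 * L / eps\<^sup>2 * (- eps\<^sup>2 / 2)"
    using assms(3) by (intro mult_right_mono_neg) (auto simp: L_def)
  also have "\<dots> = - 5 * L"
    using assms(1) by (simp add: field_simps)
  finally have "exp (eps/2 + K * ((exp (eps/2) - 1) * (1 + eps) - eps/2 * (1 + 3 * eps)))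
                \<le> exp (1/2 - 5 * L)"
    using assms(2) by simp
  also have "\<dots> = exp (1/2) * eps ^ 5"
    using assms(1) by (simp add: L_def exp_diff exp_of_nat_mult[of 5, simplified] power_one_over)
  also have "\<dots> \<le> 7/4 * (eps * (1/2) ^ 4)"
  proof (intro mult_mono)
    show "exp (1/2) \<le> (7/4 :: real)"
      using exp_bound[of "1/2::real"] by (simp add: power2_eq_square)
    have "eps ^ 4 \<le> (1/2) ^ 4" using assms(1,2) by (intro power_mono) auto
    moreover have "eps ^ 5 = eps * eps ^ 4" by (simp add: eval_nat_numeral)
    ultimately show "eps ^ 5 \<le> eps * (1/2) ^ 4" using assms(1) by (simp add: mult_left_mono)
  qed (use assms(1) in auto)
  also have "\<dots> \<le> eps"
    using assms(1) by (simp add: power_divide)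
  finally show ?thesis .
qed

locale noncrucial_setting =
  fixes V :: "'a set" and E :: "'a set set" and w :: "'a set \<Rightarrow> real"
    and Alg :: "'a set \<times> 'a set set \<Rightarrow> 'a set set"
    and eps pv pe :: real
  assumes eps_pos: "0 < eps" and eps_le: "eps \<le> 1 / exp 1"
    and pv_pos: "0 < pv" and pv_le_1: "pv \<le> 1" and pe_pos: "0 < pe" and pe_le_1: "pe \<le> 1"
    and simple: "simple_graph V E"
    and alg_max_matching: "\<And>H. H \<in> set_pmf (realization pv pe V E) \<Longrightarrow> is_max_weight_matching w H (Alg H)"
begin

abbreviation "\<rho> \<equiv> realization pv pe V E"
abbreviation "S \<equiv> samples eps pv pe V E"
abbreviation "joint \<equiv> pair_pmf S \<rho>"
abbreviation "R \<equiv> Rrounds eps pv pe"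
abbreviation "N \<equiv> Nset Alg eps pv pe V E"
abbreviation "q \<equiv> qprob Alg pv pe V E"
abbreviation "\<tau> \<equiv> tau eps pv pe"
abbreviation "c \<equiv> pv\<^sup>2 * pe"
abbreviation "lg \<equiv> ln (1 / eps)"
abbreviation "fr \<equiv> freq Alg eps pv pe"
abbreviation "cap \<equiv> (\<lambda>v. max (qN Alg eps pv pe V E v) eps)"
abbreviation "xtv \<equiv> xtilde_v Alg eps pv pe V E"
abbreviation "xf \<equiv> xfrac Alg eps pv pe V E"
abbreviation "CV \<equiv> Pi_pmf V False (\<lambda>_. bernoulli_pmf pv)"
abbreviation "CE \<equiv> Pi_pmf E False (\<lambda>_. bernoulli_pmf pe)"
abbreviation "mk \<equiv> (\<lambda>(cv, ce). ({v \<in> V. cv v}, {e \<in> E. (\<forall>v\<in>e. cv v) \<and> ce e}))"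

lemma finite_V: "finite V"
  using simple by (simp add: simple_graph_def)

lemma edge_E: "e \<in> E \<Longrightarrow> \<exists>a b. a \<in> V \<and> b \<in> V \<and> a \<noteq> b \<and> e = {a, b}"
  using simple by (simp add: simple_graph_def)

lemma edge_subset_V: "e \<in> E \<Longrightarrow> e \<subseteq> V"
  using edge_E by blast

lemma finite_E: "finite E"
  using finite_V edge_subset_V by (meson finite_Pow_iff finite_subset PowI subsetI)

lemma N_subset_E: "N \<subseteq> E"
  by (auto simp: Nset_def)

lemma finite_N: "finite N"
  using N_subset_E finite_E finite_subset by blast

lemma realization_eq: "\<rho> = map_pmf mk (pair_pmf CV CE)"
  by (simp add: realization_def)

lemma set_pmf_realization: "set_pmf \<rho> \<subseteq> Pow V \<times> Pow E"
  by (auto simp: realization_def)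

lemma finite_set_pmf_realization: "finite (set_pmf \<rho>)"
  using set_pmf_realization finite_V finite_E by (meson finite_Pow_iff finite_SigmaI finite_subset)

lemma set_pmf_samples: "\<sigma> \<in> set_pmf S \<Longrightarrow> r < R \<Longrightarrow> \<sigma> r \<in> set_pmf \<rho>"
  using set_Pi_pmf_subset'[of "{..<R}" "({}, {})" "\<lambda>_. \<rho>"]
  by (auto simp: samples_def PiE_dflt_def)

lemma finite_set_pmf_samples: "finite (set_pmf S)"
  unfolding samples_def using finite_set_pmf_realization
  by (intro finite_subset[OF set_Pi_pmf_subset'] finite_PiE_dflt) auto

lemma integrable_realization [simp]: "integrable (measure_pmf \<rho>) (f :: _ \<Rightarrow> real)"
  and integrable_samples [simp]: "integrable (measure_pmf S) (g :: _ \<Rightarrow> real)"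
  and integrable_joint [simp]: "integrable (measure_pmf joint) (h :: _ \<Rightarrow> real)"
  using finite_set_pmf_realization finite_set_pmf_samples
  by (auto intro!: integrable_measure_pmf_finite)

lemma expectation_mono_joint:
  "(\<And>x. x \<in> set_pmf joint \<Longrightarrow> f x \<le> g x) \<Longrightarrow>
   measure_pmf.expectation joint f \<le> measure_pmf.expectation joint (g :: _ \<Rightarrow> real)"
  by (intro integral_mono_AE AE_pmfI) auto

lemma lg_ge_1: "1 \<le> lg"
proof -
  have "exp 1 \<le> 1 / eps" using eps_le eps_pos by (simp add: field_simps)
  then have "ln (exp 1) \<le> lg" using eps_pos by (subst ln_le_cancel_iff) auto
  then show ?thesis by simp
qed

lemma eps_le_half: "eps \<le> 1/2"
proof -
  have "2 \<le> exp (1::real)" using exp_ge_add_one_self[of 1] by simp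
  then have "1 / exp 1 \<le> (1::real) / 2" by (intro divide_left_mono) auto
  then show ?thesis using eps_le by linarith
qed

lemma c_pos: "0 < c"
  using pv_pos pe_pos by simp

lemma c_le_1: "c \<le> 1"
proof -
  have "pv\<^sup>2 \<le> 1" using pv_pos pv_le_1 by (simp add: power_le_one)
  then show ?thesis using pe_le_1 pe_pos mult_mono[of "pv\<^sup>2" 1 pe 1] by simp
qed

lemma tau_eq: "\<tau> = eps ^ 3 * c / (20 * lg)"
  by (simp add: tau_def)

lemma tau_pos: "0 < \<tau>"
proof -
  have "0 < 20 * lg" using lg_ge_1 by linarith
  then show ?thesis unfolding tau_eq using eps_pos c_pos by (intro divide_pos_pos) auto
qed

lemma rounds_ge: "2000 * lg / (eps ^ 4 * c) \<le> R"
proof -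
  define L where "L = ln (1 / (eps * c))"
  have "1 / eps \<le> 1 / (eps * c)"
    using eps_pos c_pos c_le_1 by (intro divide_left_mono) (auto intro: mult_left_le)
  then have "lg \<le> L"
    unfolding L_def using eps_pos c_pos by (subst ln_le_cancel_iff) auto
  then have "2000 * lg \<le> 2000 * lg * L"
    using lg_ge_1 mult_left_mono[of 1 L "2000 * lg"] by simp
  then have "2000 * lg / (eps ^ 4 * c) \<le> 2000 * lg * L / (eps ^ 4 * c)"
    using eps_pos c_pos by (intro divide_right_mono) auto
  also have "\<dots> \<le> R"
    unfolding Rrounds_def L_def by (simp add: power2_eq_square mult.assoc) linarith
  finally show ?thesis .
qed

lemma rounds_ge_1: "1 \<le> real R"
proof -
  have "eps ^ 4 \<le> 1" using eps_pos eps_le_half by (simp add: power_le_one)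
  then have "eps ^ 4 * c \<le> 1" using mult_le_one[of "eps ^ 4" c] c_pos c_le_1 by simp
  then have "1 \<le> 2000 * lg / (eps ^ 4 * c)"
    using lg_ge_1 eps_pos c_pos by (simp add: le_divide_eq)
  then show ?thesis using rounds_ge by linarith
qed

lemma tau_rounds_ge: "100 / eps \<le> \<tau> * R"
proof -
  have "\<tau> * (2000 * lg / (eps ^ 4 * c)) = 100 / eps"
    using lg_ge_1 eps_pos eps_le_half pv_pos pe_pos by (simp add: tau_eq field_simps power_def)
  then show ?thesis
    using mult_left_mono[OF rounds_ge, of \<tau>] tau_pos by simp
qed

lemma eps3_rounds_ge: "2000 / eps \<le> eps ^ 3 * R"
proof -
  have "2000 / eps \<le> 2000 * lg / (eps * c)"
    using lg_ge_1 eps_pos c_pos c_le_1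
    by (simp add: field_simps)
  also have "\<dots> = eps ^ 3 * (2000 * lg / (eps ^ 4 * c))"
    using eps_pos c_pos by (simp add: field_simps power_def)
  also have "\<dots> \<le> eps ^ 3 * R"
    using rounds_ge eps_pos by (intro mult_left_mono) auto
  finally show ?thesis .
qed

definition matched :: "'a set \<Rightarrow> 'a realz \<Rightarrow> real" where
  "matched e H = of_bool (e \<in> Alg H)"

definition matched_N_at :: "'a \<Rightarrow> 'a realz \<Rightarrow> real" where
  "matched_N_at v H = (\<Sum>e\<in>{e \<in> N. v \<in> e}. matched e H)"

definition freq_N_at :: "(nat \<Rightarrow> 'a realz) \<Rightarrow> 'a \<Rightarrow> real" where
  "freq_N_at \<sigma> v = (\<Sum>e\<in>{e \<in> N. v \<in> e}. fr \<sigma> e)"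

lemma matched_bounds [simp]: "0 \<le> matched e H" "matched e H \<le> 1"
  by (auto simp: matched_def)

lemma alg_in_realization:
  assumes "H \<in> set_pmf \<rho>"
  shows "Alg H \<subseteq> snd H" "is_matching (Alg H)" "finite (Alg H)"
proof -
  show "Alg H \<subseteq> snd H" "is_matching (Alg H)"
    using alg_max_matching[OF assms] by (auto simp: is_max_weight_matching_def)
  moreover have "snd H \<subseteq> E"
    using assms set_pmf_realization by (cases H) auto
  ultimately show "finite (Alg H)"
    using finite_E by (meson finite_subset order_trans)
qed

lemma matched_N_at_bounds:
  assumes "H \<in> set_pmf \<rho>"
  shows "0 \<le> matched_N_at v H" "matched_N_at v H \<le> 1"
proof -
  show "0 \<le> matched_N_at v H" unfolding matched_N_at_def by (intro sum_nonneg) simp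
  have "matched_N_at v H = card {e \<in> {e \<in> N. v \<in> e}. e \<in> Alg H}"
    unfolding matched_N_at_def matched_def of_bool_def
    by (subst sum.inter_filter[symmetric]) (use finite_N in auto)
  also have "\<dots> \<le> card {e \<in> Alg H. v \<in> e}"
    using alg_in_realization[OF assms] by (intro of_nat_mono card_mono) auto
  also have "\<dots> \<le> 1"
    using card_edges_at_matching_le_1 alg_in_realization[OF assms] by simp
  finally show "matched_N_at v H \<le> 1" .
qed

lemma expectation_matched: "measure_pmf.expectation \<rho> (matched e) = q e"
proof -
  have "matched e = indicator {H. e \<in> Alg H}" by (auto simp: matched_def indicator_def)
  then show ?thesis by (simp add: qprob_def)
qed

lemma expectation_matched_N_at: "measure_pmf.expectation \<rho> (matched_N_at v) = qN Alg eps pv pe V E v"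
  unfolding matched_N_at_def qN_def by (simp add: expectation_matched)

lemma q_nonneg: "0 \<le> q e"
  by (simp add: qprob_def)

lemma fr_eq_sum: "fr \<sigma> e = (\<Sum>r<R. matched e (\<sigma> r)) / real R"
proof -
  have "(\<Sum>r<R. matched e (\<sigma> r)) = card {r \<in> {..<R}. e \<in> Alg (\<sigma> r)}"
    unfolding matched_def of_bool_def by (subst sum.inter_filter[symmetric]) auto
  then show ?thesis by (simp add: freq_def)
qed

lemma fr_bounds: "0 \<le> fr \<sigma> e" "fr \<sigma> e \<le> 1"
proof -
  show "0 \<le> fr \<sigma> e" by (simp add: freq_def)
  have "card {r \<in> {..<R}. e \<in> Alg (\<sigma> r)} \<le> card {..<R}" by (intro card_mono) auto
  then show "fr \<sigma> e \<le> 1" using rounds_ge_1 by (simp add: freq_def)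
qed

lemma freq_N_at_eq_sum: "freq_N_at \<sigma> v = (\<Sum>r<R. matched_N_at v (\<sigma> r)) / R"
  unfolding freq_N_at_def matched_N_at_def fr_eq_sum
  by (simp add: sum_divide_distrib[symmetric] sum.swap[of _ "{..<R}"])

lemma expectation_samples_component:
  "r < R \<Longrightarrow> measure_pmf.expectation S (\<lambda>\<sigma>. g (\<sigma> r)) = measure_pmf.expectation \<rho> (g :: _ \<Rightarrow> real)"
proof -
  assume "r < R"
  have "measure_pmf.expectation S (\<lambda>\<sigma>. g (\<sigma> r)) = measure_pmf.expectation (map_pmf (\<lambda>\<sigma>. \<sigma> r) S) g"
    by simp
  also have "map_pmf (\<lambda>\<sigma>. \<sigma> r) S = \<rho>"
    unfolding samples_def by (subst Pi_pmf_component) (use \<open>r < R\<close> in auto)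
  finally show ?thesis .
qed

lemma expectation_fr: "measure_pmf.expectation S (\<lambda>\<sigma>. fr \<sigma> e) = q e"
  using rounds_ge_1
  by (simp add: fr_eq_sum expectation_samples_component expectation_matched)

text \<open>The event that a threshold is exceeded over all rounds is controlled, jointly with
  the match of \<open>e\<close> in round \<open>r\<close>, by a Chernoff bound over the other rounds, which are
  independent of round \<open>r\<close>.\<close>

lemma round_excess_bound:
  fixes g :: "'a realz \<Rightarrow> real"
  assumes r: "r < R" and g01: "\<And>H. H \<in> set_pmf \<rho> \<Longrightarrow> 0 \<le> g H \<and> g H \<le> 1" and "0 \<le> l"
  shows "measure_pmf.expectation S (\<lambda>\<sigma>. matched e (\<sigma> r) * of_bool (\<theta> * real R < (\<Sum>j<R. g (\<sigma> j))))
         \<le> q e * exp (- l * (\<theta> * real R - 1) + (exp l - 1) * (real R * measure_pmf.expectation \<rho> g))"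
proof -
  define A where "A = {\<sigma>. \<theta> * real R - 1 \<le> (\<Sum>j\<in>{..<R} - {r}. g (\<sigma> j))}"
  define Rest where "Rest = Pi_pmf ({..<R} - {r}) ({}, {}) (\<lambda>_. \<rho>)"
  have "measure_pmf.expectation S (\<lambda>\<sigma>. matched e (\<sigma> r) * of_bool (\<theta> * real R < (\<Sum>j<R. g (\<sigma> j))))
        \<le> measure_pmf.expectation S (\<lambda>\<sigma>. matched e (\<sigma> r) * indicator A \<sigma>)"
  proof (intro integral_mono_AE AE_pmfI integrable_samples mult_left_mono)
    fix \<sigma> assume "\<sigma> \<in> set_pmf S"
    then have "g (\<sigma> r) \<le> 1" using g01 set_pmf_samples r by blast
    moreover have "(\<Sum>j<R. g (\<sigma> j)) = g (\<sigma> r) + (\<Sum>j\<in>{..<R} - {r}. g (\<sigma> j))"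
      using r by (subst sum.remove[of _ r]) auto
    ultimately show "of_bool (\<theta> * real R < (\<Sum>j<R. g (\<sigma> j))) \<le> (indicator A \<sigma> :: real)"
      by (auto simp: A_def indicator_def)
  qed simp
  also have "\<dots> = measure_pmf.expectation \<rho> (matched e) * measure_pmf.prob Rest A"
    unfolding samples_def Rest_def
    by (subst expectation_Pi_pmf_split[where A=1 and B=1]) (use r in \<open>auto simp: A_def indicator_def\<close>)
  also have "\<dots> \<le> q e * exp (- l * (\<theta> * real R - 1) + (exp l - 1) * (\<Sum>i\<in>{..<R} - {r}. measure_pmf.expectation \<rho> g))"
    unfolding expectation_matched Rest_def A_def
    by (intro mult_left_mono q_nonneg chernoff_Pi_pmf) (use g01 \<open>0 \<le> l\<close> in auto)
  also have "\<dots> \<le> q e * exp (- l * (\<theta> * real R - 1) + (exp l - 1) * (real R * measure_pmf.expectation \<rho> g))"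
  proof -
    have "0 \<le> measure_pmf.expectation \<rho> g"
      using g01 by (intro integral_nonneg_AE AE_pmfI) auto
    moreover have "card ({..<R} - {r}) \<le> R" using card_Diff1_le[of "{..<R}" r] by simp
    ultimately have "(\<Sum>i\<in>{..<R} - {r}. measure_pmf.expectation \<rho> g) \<le> real R * measure_pmf.expectation \<rho> g"
      by (simp add: mult_right_mono)
    then show ?thesis
      using \<open>0 \<le> l\<close> by (intro mult_left_mono q_nonneg) (auto intro!: mult_left_mono)
  qed
  finally show ?thesis .
qed

lemma freq_excess_bound:
  assumes "e \<in> N" "r < R"
  shows "measure_pmf.expectation S (\<lambda>\<sigma>. matched e (\<sigma> r) * of_bool (2 * \<tau> < fr \<sigma> e)) \<le> eps * q e"
proof -
  have "(2 * \<tau> < fr \<sigma> e) = (2 * \<tau> * real R < (\<Sum>j<R. matched e (\<sigma> j)))" for \<sigma>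
    using rounds_ge_1 by (simp add: fr_eq_sum field_simps)
  then have "measure_pmf.expectation S (\<lambda>\<sigma>. matched e (\<sigma> r) * of_bool (2 * \<tau> < fr \<sigma> e))
      \<le> q e * exp (- (1/2) * (2 * \<tau> * real R - 1) + (exp (1/2) - 1) * (real R * q e))"
    using round_excess_bound[OF \<open>r < R\<close>, of "matched e" "1/2" e "2 * \<tau>"]
    by (simp add: expectation_matched)
  also have "\<dots> \<le> q e * eps"
  proof (intro mult_left_mono q_nonneg)
    have "q e < \<tau>" using \<open>e \<in> N\<close> by (auto simp: Nset_def)
    then have Rq: "real R * q e \<le> real R * \<tau>" using rounds_ge_1 by simp
    have "exp (1/2) - 1 \<le> (3/4::real)"
      using exp_bound[of "1/2::real"] by (simp add: power2_eq_square)
    from mult_mono[OF this Rq] have "(exp (1/2) - 1) * (real R * q e) \<le> 3/4 * (real R * \<tau>)"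
      using q_nonneg[of e] by simp
    then have "- (1/2) * (2 * \<tau> * real R - 1) + (exp (1/2) - 1) * (real R * q e) \<le> 1/2 - \<tau> * real R / 4"
      by (simp add: algebra_simps)
    moreover have "exp (1/2 - \<tau> * real R / 4) \<le> eps"
      using tau_rounds_ge eps_pos by (intro exp_half_minus_le) auto
    ultimately show "exp (- (1/2) * (2 * \<tau> * real R - 1) + (exp (1/2) - 1) * (real R * q e)) \<le> eps"
      by (meson exp_le_cancel_iff order_trans)
  qed
  finally show ?thesis by (simp add: mult.commute)
qed

lemma freq_N_at_excess_bound:
  assumes "r < R"
  shows "measure_pmf.expectation S (\<lambda>\<sigma>. matched e (\<sigma> r) * of_bool ((1 + eps) * cap v < freq_N_at \<sigma> v))
         \<le> eps * q e"
proof -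
  define m where "m = cap v"
  define Q where "Q = qN Alg eps pv pe V E v"
  have "((1 + eps) * m < freq_N_at \<sigma> v) = ((1 + eps) * m * real R < (\<Sum>j<R. matched_N_at v (\<sigma> j)))" for \<sigma>
    using rounds_ge_1 by (simp add: freq_N_at_eq_sum field_simps)
  then have "measure_pmf.expectation S (\<lambda>\<sigma>. matched e (\<sigma> r) * of_bool ((1 + eps) * m < freq_N_at \<sigma> v))
      \<le> q e * exp (- (eps/2) * ((1 + eps) * m * real R - 1) + (exp (eps/2) - 1) * (real R * Q))"
    using round_excess_bound[OF \<open>r < R\<close>, of "matched_N_at v" "eps/2" e "(1 + eps) * m"]
      matched_N_at_bounds eps_pos
    by (simp add: expectation_matched_N_at Q_def)
  also have "\<dots> \<le> q e * eps"
  proof (intro mult_left_mono q_nonneg)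
    have "0 \<le> Q" "Q \<le> m" "eps \<le> m"
      unfolding Q_def m_def qN_def by (auto intro: sum_nonneg q_nonneg)
    have "exp (eps/2) - 1 \<le> eps/2 + eps\<^sup>2/4"
      using exp_bound[of "eps/2"] eps_pos eps_le_half by (simp add: power2_eq_square)
    then have "(exp (eps/2) - 1) * (real R * Q) \<le> (eps/2 + eps\<^sup>2/4) * (real R * m)"
      using \<open>0 \<le> Q\<close> \<open>Q \<le> m\<close> rounds_ge_1 eps_pos by (intro mult_mono) auto
    then have "- (eps/2) * ((1 + eps) * m * real R - 1) + (exp (eps/2) - 1) * (real R * Q)
               \<le> eps/2 - eps\<^sup>2 * m * real R / 4"
      by (simp add: algebra_simps power2_eq_square)
    also have "\<dots> \<le> 1/2 - eps ^ 3 * real R / 4"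
    proof -
      have "eps ^ 3 * real R \<le> eps\<^sup>2 * m * real R"
        using \<open>eps \<le> m\<close> rounds_ge_1 eps_pos by (simp add: power3_eq_cube power2_eq_square)
      then show ?thesis using eps_le_half by simp
    qed
    also have "exp (1/2 - eps ^ 3 * real R / 4) \<le> eps"
    proof (rule exp_half_minus_le)
      have "100 / eps \<le> 2000 / eps" using eps_pos by (simp add: divide_right_mono)
      then show "25 / eps \<le> eps ^ 3 * real R / 4" using eps3_rounds_ge by simp
    qed (rule eps_pos)
    finally show "exp (- (eps/2) * ((1 + eps) * m * real R - 1) + (exp (eps/2) - 1) * (real R * Q)) \<le> eps"
      by simp
  qed
  finally show ?thesis by (simp add: mult.commute m_def)
qed

abbreviation "xmax \<equiv> 2 * \<tau> / c"

text \<open>The value that \<open>x\<^sub>e\<close> of step (1) takes whenever \<open>e\<close> is realized; it depends on the samples only.\<close>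

definition xval :: "(nat \<Rightarrow> 'a realz) \<Rightarrow> 'a set \<Rightarrow> real" where
  "xval \<sigma> e = (if e \<in> EQ Alg eps pv pe \<sigma> \<inter> N then min (fr \<sigma> e / c) xmax else 0)"

lemma xtilde_eq: "xtilde Alg eps pv pe V E \<sigma> H e = (if e \<in> snd H then xval \<sigma> e else 0)"
  by (auto simp: xtilde_def xval_def)

lemma xval_nonneg: "0 \<le> xval \<sigma> e"
  using fr_bounds(1)[of \<sigma> e] c_pos tau_pos by (auto simp: xval_def)

lemma xval_le: "xval \<sigma> e \<le> xmax"
  using tau_pos c_pos by (auto simp: xval_def)

lemma xval_le_fr: "xval \<sigma> e \<le> (if e \<in> N then fr \<sigma> e / c else 0)"
  using fr_bounds(1)[of \<sigma> e] c_pos by (auto simp: xval_def)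

lemma exp_xval_bounds:
  assumes "0 \<le> lam"
  shows "1 \<le> exp (lam * xval \<sigma> e)" "exp (lam * xval \<sigma> e) \<le> exp (lam * xmax)"
  using assms xval_nonneg[of \<sigma> e] mult_left_mono[OF xval_le[of \<sigma> e] assms] by auto

lemma xtilde_nonneg: "0 \<le> xtilde Alg eps pv pe V E \<sigma> H e"
  using xval_nonneg by (simp add: xtilde_eq)

definition other_nbrs :: "'a \<Rightarrow> 'a \<Rightarrow> 'a set" where
  "other_nbrs v u = {z \<in> V. z \<noteq> u \<and> z \<noteq> v \<and> {v, z} \<in> E}"

lemma finite_other_nbrs: "finite (other_nbrs v u)"
  using finite_V by (simp add: other_nbrs_def)

lemma not_in_other_nbrs: "u \<notin> other_nbrs v u" "v \<notin> other_nbrs v u"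
  by (auto simp: other_nbrs_def)

lemma edges_at_eq:
  assumes "{v, u} \<in> E"
  shows "{e \<in> E. v \<in> e} = insert {v, u} ((\<lambda>z. {v, z}) ` other_nbrs v u)"
proof (intro equalityI subsetI)
  fix e assume "e \<in> {e \<in> E. v \<in> e}"
  then obtain a b where "a \<in> V" "b \<in> V" "a \<noteq> b" "e = {a, b}" "v \<in> e" "e \<in> E"
    using edge_E by blast
  then obtain z where "z \<in> V" "z \<noteq> v" "e = {v, z}" "e \<in> E"
    by (metis empty_iff insert_commute insert_iff)
  then show "e \<in> insert {v, u} ((\<lambda>z. {v, z}) ` other_nbrs v u)"
    by (cases "z = u") (auto simp: other_nbrs_def)
qed (use assms in \<open>auto simp: other_nbrs_def\<close>)

lemma xtv_split:
  assumes "{v, u} \<in> E" "v \<noteq> u"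
  shows "xtv \<sigma> H v = xtilde Alg eps pv pe V E \<sigma> H {v, u} +
                      (\<Sum>z\<in>other_nbrs v u. xtilde Alg eps pv pe V E \<sigma> H {v, z})"
proof -
  have "{v, u} \<notin> (\<lambda>z. {v, z}) ` other_nbrs v u"
    using assms(2) by (auto simp: other_nbrs_def doubleton_eq_iff)
  then show ?thesis
    unfolding xtilde_v_def edges_at_eq[OF assms(1)]
    by (simp add: finite_other_nbrs sum.reindex[OF inj_on_doubleton])
qed

text \<open>Markov's inequality for \<open>exp (lam * x\<^sub>v)\<close>, written in terms of the coins \<open>cv\<close>, \<open>ce\<close> of
  the realization: on \<open>{v, u}\<close> realized, the load of \<open>v\<close> is at most \<open>xmax\<close> (from \<open>{v, u}\<close>)
  plus the values of the other realized edges at \<open>v\<close>.\<close>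

lemma load_indicator_le_mgf_weight:
  assumes "{v, u} \<in> E" "v \<noteq> u" "0 \<le> lam"
  shows "of_bool ({v, u} \<in> snd (mk (cv, ce)) \<and> T < pv * xtv \<sigma> (mk (cv, ce)) v)
     \<le> exp (lam * xmax - lam * T / pv) * (of_bool (cv u \<and> cv v) *
          (of_bool (ce {v, u}) * (\<Prod>z\<in>other_nbrs v u. exp (lam * of_bool (cv z \<and> ce {v, z}) * xval \<sigma> {v, z}))))"
proof (cases "{v, u} \<in> snd (mk (cv, ce)) \<and> T < pv * xtv \<sigma> (mk (cv, ce)) v")
  case True
  let ?H = "mk (cv, ce)"
  let ?rest = "\<Sum>z\<in>other_nbrs v u. of_bool (cv z \<and> ce {v, z}) * xval \<sigma> {v, z}"
  have coins: "cv v" "cv u" "ce {v, u}" using True by auto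
  have "xtv \<sigma> ?H v \<le> xmax + ?rest"
  proof -
    have "xtilde Alg eps pv pe V E \<sigma> ?H {v, z} = of_bool (cv z \<and> ce {v, z}) * xval \<sigma> {v, z}"
      if "z \<in> other_nbrs v u" for z
      using that coins by (auto simp: xtilde_eq other_nbrs_def)
    then show ?thesis
      using xtv_split[OF assms(1,2), of \<sigma> ?H] xval_le[of \<sigma> "{v, u}"] tau_pos c_pos
      by (simp add: xtilde_eq)
  qed
  moreover have "T / pv < xtv \<sigma> ?H v" using True pv_pos by (simp add: field_simps)
  ultimately have "lam * (T / pv) \<le> lam * (xmax + ?rest)"
    using assms(3) by (intro mult_left_mono) auto
  then have "0 \<le> lam * xmax - lam * T / pv + lam * ?rest"
    by (simp add: algebra_simps)
  then have "1 \<le> exp (lam * xmax - lam * T / pv + lam * ?rest)"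
    by simp
  also have "\<dots> = exp (lam * xmax - lam * T / pv) * exp (lam * ?rest)"
    by (rule exp_add)
  also have "exp (lam * ?rest) =
      (\<Prod>z\<in>other_nbrs v u. exp (lam * of_bool (cv z \<and> ce {v, z}) * xval \<sigma> {v, z}))"
    by (simp only: sum_distrib_left exp_sum[OF finite_other_nbrs] mult.assoc)
  finally show ?thesis using True coins by simp
qed (auto intro!: mult_nonneg_nonneg prod_nonneg)

lemma expectation_edge_coins_mgf:
  assumes "{v, u} \<in> E" "v \<noteq> u" "0 \<le> lam"
  shows "measure_pmf.expectation CE (\<lambda>ce. of_bool (ce {v, u}) *
            (\<Prod>z\<in>other_nbrs v u. exp (lam * of_bool (cv z \<and> ce {v, z}) * xval \<sigma> {v, z})))
         = pe * (\<Prod>z\<in>other_nbrs v u. 1 + pe * of_bool (cv z) * (exp (lam * xval \<sigma> {v, z}) - 1))"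
proof -
  define g where "g = (\<lambda>z b. if z = u then of_bool b
                              else exp (lam * of_bool (cv z \<and> b) * xval \<sigma> {v, z}) :: real)"
  have g_nbr: "g z b = exp (lam * of_bool (cv z \<and> b) * xval \<sigma> {v, z})"
    if "z \<in> other_nbrs v u" for z b
    using that by (auto simp: g_def other_nbrs_def)
  have g_u: "g u b = of_bool b" for b
    by (simp add: g_def)
  have prod_g: "(\<Prod>z\<in>insert u (other_nbrs v u). F z) = F u * (\<Prod>z\<in>other_nbrs v u. F z)"
    for F :: "'a \<Rightarrow> real"
    by (simp add: finite_other_nbrs not_in_other_nbrs)
  have "measure_pmf.expectation CE (\<lambda>ce. of_bool (ce {v, u}) *
            (\<Prod>z\<in>other_nbrs v u. exp (lam * of_bool (cv z \<and> ce {v, z}) * xval \<sigma> {v, z})))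
        = measure_pmf.expectation CE (\<lambda>ce. \<Prod>z\<in>insert u (other_nbrs v u). g z (ce {v, z}))"
    unfolding prod_g by (simp add: g_nbr g_u cong: prod.cong)
  also have "\<dots> = (\<Prod>z\<in>insert u (other_nbrs v u). measure_pmf.expectation (bernoulli_pmf pe) (g z))"
    using assms(1) finite_E finite_other_nbrs
    by (intro expectation_Pi_pmf_prod_reindex inj_on_doubleton) (auto simp: other_nbrs_def g_def)
  also have "\<dots> = pe * (\<Prod>z\<in>other_nbrs v u. 1 + pe * of_bool (cv z) * (exp (lam * xval \<sigma> {v, z}) - 1))"
  proof -
    have "measure_pmf.expectation (bernoulli_pmf pe) (g z) =
          1 + pe * of_bool (cv z) * (exp (lam * xval \<sigma> {v, z}) - 1)" if "z \<in> other_nbrs v u" for z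
      using pe_pos pe_le_1 by (cases "cv z") (simp_all add: g_nbr[OF that] algebra_simps)
    then show ?thesis
      unfolding prod_g using pe_pos pe_le_1 by (simp add: g_u cong: prod.cong)
  qed
  finally show ?thesis .
qed

lemma expectation_vertex_coins_mgf:
  assumes "{v, u} \<in> E" "v \<noteq> u" "0 \<le> lam"
  shows "measure_pmf.expectation CV (\<lambda>cv. of_bool (cv u \<and> cv v) *
            (pe * (\<Prod>z\<in>other_nbrs v u. 1 + pe * of_bool (cv z) * (exp (lam * xval \<sigma> {v, z}) - 1))))
         = c * (\<Prod>z\<in>other_nbrs v u. 1 + pv * pe * (exp (lam * xval \<sigma> {v, z}) - 1))"
proof -
  define h where "h = (\<lambda>z b. if z = u \<or> z = v then of_bool b
                              else 1 + pe * of_bool b * (exp (lam * xval \<sigma> {v, z}) - 1) :: real)"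
  have h_nonneg: "0 \<le> h z y" for z y
    using exp_xval_bounds(1)[OF assms(3), of \<sigma> "{v, z}"] pe_pos by (simp add: h_def)
  have h_nbr: "h z b = 1 + pe * of_bool b * (exp (lam * xval \<sigma> {v, z}) - 1)"
    if "z \<in> other_nbrs v u" for z b
    using that by (auto simp: h_def other_nbrs_def)
  have h_endpoints: "h u b = of_bool b" "h v b = of_bool b" for b
    by (simp_all add: h_def)
  have nbrs: "u \<notin> insert v (other_nbrs v u)" "v \<notin> other_nbrs v u"
    using assms(2) not_in_other_nbrs by auto
  have prod_h: "(\<Prod>z\<in>insert u (insert v (other_nbrs v u)). F z) = F u * (F v * (\<Prod>z\<in>other_nbrs v u. F z))"
    for F :: "'a \<Rightarrow> real"
    using nbrs by (simp add: finite_other_nbrs)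
  have "measure_pmf.expectation CV (\<lambda>cv. of_bool (cv u \<and> cv v) *
            (pe * (\<Prod>z\<in>other_nbrs v u. 1 + pe * of_bool (cv z) * (exp (lam * xval \<sigma> {v, z}) - 1))))
        = pe * measure_pmf.expectation CV (\<lambda>cv. \<Prod>z\<in>insert u (insert v (other_nbrs v u)). h z (cv (id z)))"
    unfolding prod_h by (simp add: h_nbr h_endpoints of_bool_conj mult_ac cong: prod.cong)
  also have "measure_pmf.expectation CV (\<lambda>cv. \<Prod>z\<in>insert u (insert v (other_nbrs v u)). h z (cv (id z)))
        = (\<Prod>z\<in>insert u (insert v (other_nbrs v u)). measure_pmf.expectation (bernoulli_pmf pv) (h z))"
    using h_nonneg edge_subset_V[OF assms(1)] finite_V finite_other_nbrs
    by (intro expectation_Pi_pmf_prod_reindex) (auto simp: other_nbrs_def)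
  also have "\<dots> = pv * (pv * (\<Prod>z\<in>other_nbrs v u. 1 + pv * pe * (exp (lam * xval \<sigma> {v, z}) - 1)))"
  proof -
    have "measure_pmf.expectation (bernoulli_pmf pv) (h z) = 1 + pv * pe * (exp (lam * xval \<sigma> {v, z}) - 1)"
      if "z \<in> other_nbrs v u" for z
      using pv_pos pv_le_1 by (simp add: h_nbr[OF that] algebra_simps)
    then show ?thesis
      unfolding prod_h using pv_pos pv_le_1 by (simp add: h_endpoints cong: prod.cong)
  qed
  finally show ?thesis
    by (simp add: power2_eq_square mult_ac)
qed

lemma load_tail_le_product:
  assumes "{v, u} \<in> E" "v \<noteq> u" "0 \<le> lam"
  shows "measure_pmf.expectation \<rho> (\<lambda>H. of_bool ({v, u} \<in> snd H \<and> T < pv * xtv \<sigma> H v))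
         \<le> exp (lam * xmax - lam * T / pv) *
            (c * (\<Prod>z\<in>other_nbrs v u. 1 + pv * pe * (exp (lam * xval \<sigma> {v, z}) - 1)))"
proof -
  define K where "K = exp (lam * xmax - lam * T / pv)"
  define B where "B = exp (lam * xmax) ^ card (other_nbrs v u)"
  define P where "P = (\<lambda>cv ce. \<Prod>z\<in>other_nbrs v u. exp (lam * of_bool (cv z \<and> ce {v, z}) * xval \<sigma> {v, z}))"
  define \<Phi> where "\<Phi> = (\<lambda>(cv, ce). of_bool (cv u \<and> cv v) * (of_bool (ce {v, u}) * P cv ce))"
  have P_bounds: "0 \<le> P cv ce \<and> P cv ce \<le> B" for cv ce
  proof -
    have "P cv ce \<le> (\<Prod>z\<in>other_nbrs v u. exp (lam * xmax))"
      unfolding P_def using exp_xval_bounds[OF assms(3)] assms(3) tau_pos c_pos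
      by (intro prod_mono) (auto simp: of_bool_def)
    then show ?thesis by (simp add: P_def B_def prod_nonneg)
  qed
  have \<Phi>_bounds: "0 \<le> \<Phi> x" "\<Phi> x \<le> B" for x
    using P_bounds order_trans[OF conjunct1 conjunct2, OF P_bounds] by (auto simp: \<Phi>_def split: prod.splits)
  have "measure_pmf.expectation \<rho> (\<lambda>H. of_bool ({v, u} \<in> snd H \<and> T < pv * xtv \<sigma> H v))
        \<le> measure_pmf.expectation (pair_pmf CV CE) (\<lambda>x. K * \<Phi> x)"
    unfolding realization_eq integral_map_pmf
  proof (rule expectation_mono_bounded[where B=1 and B'="K * B"])
    fix x :: "('a \<Rightarrow> bool) \<times> ('a set \<Rightarrow> bool)"
    obtain cv ce where x: "x = (cv, ce)" by (cases x)
    show "of_bool ({v, u} \<in> snd (mk x) \<and> T < pv * xtv \<sigma> (mk x) v) \<le> K * \<Phi> x"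
      using load_indicator_le_mgf_weight[OF assms, where cv=cv and ce=ce and T=T and \<sigma>=\<sigma>] unfolding x \<Phi>_def P_def K_def by simp
    show "\<bar>of_bool ({v, u} \<in> snd (mk x) \<and> T < pv * xtv \<sigma> (mk x) v)\<bar> \<le> (1::real)"
      by simp
    show "\<bar>K * \<Phi> x\<bar> \<le> K * B"
      using \<Phi>_bounds[of x] by (simp add: K_def)
  qed
  also have "\<dots> = K * measure_pmf.expectation CV (\<lambda>cv. measure_pmf.expectation CE (\<lambda>ce. \<Phi> (cv, ce)))"
    by (simp add: expectation_pair_pmf_iterated[where B=B] \<Phi>_bounds)
  also have "(\<lambda>cv. measure_pmf.expectation CE (\<lambda>ce. \<Phi> (cv, ce))) =
             (\<lambda>cv. of_bool (cv u \<and> cv v) *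
               (pe * (\<Prod>z\<in>other_nbrs v u. 1 + pe * of_bool (cv z) * (exp (lam * xval \<sigma> {v, z}) - 1))))"
    by (simp add: \<Phi>_def P_def expectation_edge_coins_mgf[OF assms])
  finally show ?thesis
    by (simp add: expectation_vertex_coins_mgf[OF assms] K_def)
qed

lemma sum_nbr_xval_le:
  assumes "{v, u} \<in> E"
  shows "(\<Sum>z\<in>other_nbrs v u. pv * pe * xval \<sigma> {v, z}) \<le> freq_N_at \<sigma> v / pv"
proof -
  have "(\<Sum>z\<in>other_nbrs v u. pv * pe * xval \<sigma> {v, z})
        \<le> (\<Sum>z\<in>other_nbrs v u. of_bool ({v, z} \<in> N) * fr \<sigma> {v, z} / pv)"
  proof (rule sum_mono)
    fix z
    have "pv * pe * xval \<sigma> {v, z} \<le> pv * pe * (of_bool ({v, z} \<in> N) * fr \<sigma> {v, z} / c)"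
      using xval_le_fr[of \<sigma> "{v, z}"] pv_pos pe_pos by (intro mult_left_mono) auto
    then show "pv * pe * xval \<sigma> {v, z} \<le> of_bool ({v, z} \<in> N) * fr \<sigma> {v, z} / pv"
      using pv_pos pe_pos by (simp add: power2_eq_square field_simps)
  qed
  also have "\<dots> = (\<Sum>e\<in>(\<lambda>z. {v, z}) ` other_nbrs v u. of_bool (e \<in> N) * fr \<sigma> e) / pv"
    by (simp add: sum_divide_distrib sum.reindex[OF inj_on_doubleton])
  also have "\<dots> \<le> freq_N_at \<sigma> v / pv"
  proof (intro divide_right_mono)
    have "(\<Sum>e\<in>(\<lambda>z. {v, z}) ` other_nbrs v u. of_bool (e \<in> N) * fr \<sigma> e)
          = (\<Sum>e\<in>(\<lambda>z. {v, z}) ` other_nbrs v u. if e \<in> N then fr \<sigma> e else 0)"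
      by (intro sum.cong) auto
    also have "\<dots> = (\<Sum>e\<in>{e \<in> (\<lambda>z. {v, z}) ` other_nbrs v u. e \<in> N}. fr \<sigma> e)"
      by (rule sum.inter_filter[symmetric]) (simp add: finite_other_nbrs)
    also have "\<dots> \<le> freq_N_at \<sigma> v"
      unfolding freq_N_at_def by (rule sum_mono2) (use finite_N fr_bounds in auto)
    finally show "(\<Sum>e\<in>(\<lambda>z. {v, z}) ` other_nbrs v u. of_bool (e \<in> N) * fr \<sigma> e) \<le> freq_N_at \<sigma> v" .
  qed (use pv_pos in simp)
  finally show ?thesis .
qed

lemma xval_mgf_term_le:
  "pv * pe * (exp (eps / 2 / xmax * xval \<sigma> e) - 1) \<le> (exp (eps / 2) - 1) / xmax * (pv * pe * xval \<sigma> e)"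
proof -
  define b where "b = xmax"
  have "0 < b" unfolding b_def using tau_pos c_pos by simp
  have "0 \<le> xval \<sigma> e / b" "xval \<sigma> e / b \<le> 1"
    using xval_nonneg[of \<sigma> e] xval_le[of \<sigma> e, folded b_def] \<open>0 < b\<close>
    by (simp_all add: divide_le_eq)
  then have "exp (eps / 2 * (xval \<sigma> e / b)) \<le> 1 + (exp (eps / 2) - 1) * (xval \<sigma> e / b)"
    by (rule exp_mult_le_chord)
  then have "pv * pe * (exp (eps / 2 * (xval \<sigma> e / b)) - 1) \<le> pv * pe * ((exp (eps / 2) - 1) * (xval \<sigma> e / b))"
    using pv_pos pe_pos by (intro mult_left_mono) auto
  then show ?thesis
    unfolding b_def[symmetric] by (simp add: field_simps)
qed

lemma load_scale_ge: "10 * lg / eps\<^sup>2 \<le> cap v / (xmax * pv)"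
proof -
  define b where "b = xmax"
  have "0 < b" unfolding b_def using tau_pos c_pos by simp
  have "b = eps ^ 3 / (10 * lg)"
    unfolding b_def tau_eq using c_pos lg_ge_1 pv_pos pe_pos by (simp add: field_simps)
  then have "10 * lg / eps\<^sup>2 = eps / b"
    using eps_pos lg_ge_1 by (simp add: field_simps power2_eq_square power3_eq_cube)
  also have "\<dots> \<le> cap v / b" using \<open>0 < b\<close> by (simp add: divide_right_mono)
  also have "\<dots> \<le> cap v / (b * pv)"
    using eps_pos \<open>0 < b\<close> pv_pos pv_le_1 mult_left_le_one_le[of "cap v" pv]
    by (simp add: field_simps)
  finally show ?thesis by (simp add: b_def)
qed

text \<open>A Chernoff-type bound via \<open>load_tail_le_product\<close> with \<open>lam = (eps/2) / xmax\<close>, so that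
  every term in the exponent is scaled into \<open>[0, eps/2]\<close>.\<close>

lemma load_tail_bound:
  assumes "{v, u} \<in> N" "v \<noteq> u" and freq_ok: "freq_N_at \<sigma> v \<le> (1 + eps) * cap v"
  shows "measure_pmf.expectation \<rho> (\<lambda>H. of_bool ({v, u} \<in> snd H \<and> (1 + 3 * eps) * cap v < pv * xtv \<sigma> H v))
         \<le> c * eps"
proof -
  have uv_E: "{v, u} \<in> E" using assms(1) N_subset_E by auto
  define m where "m = cap v"
  define b where "b = xmax"
  define lam where "lam = (eps / 2) / b"
  define a where "a = (\<lambda>z. pv * pe * (exp (lam * xval \<sigma> {v, z}) - 1))"
  define K where "K = m / (b * pv)"
  have "0 < b" unfolding b_def using tau_pos c_pos by simp
  have "0 \<le> lam" unfolding lam_def using eps_pos \<open>0 < b\<close> by simp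
  have a_nonneg: "0 \<le> a z" for z
    using exp_xval_bounds(1)[OF \<open>0 \<le> lam\<close>] pv_pos pe_pos by (simp add: a_def)
  have a_le: "a z \<le> (exp (eps/2) - 1) / b * (pv * pe * xval \<sigma> {v, z})" for z
    unfolding a_def lam_def b_def by (rule xval_mgf_term_le)
  have sum_a: "(\<Sum>z\<in>other_nbrs v u. a z) \<le> (exp (eps/2) - 1) / b * ((1 + eps) * m / pv)"
  proof -
    have "(\<Sum>z\<in>other_nbrs v u. a z) \<le> (exp (eps/2) - 1) / b * (\<Sum>z\<in>other_nbrs v u. pv * pe * xval \<sigma> {v, z})"
      unfolding sum_distrib_left by (intro sum_mono a_le)
    also have "\<dots> \<le> (exp (eps/2) - 1) / b * ((1 + eps) * m / pv)"
    proof (intro mult_left_mono)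
      have "freq_N_at \<sigma> v / pv \<le> (1 + eps) * m / pv"
        using freq_ok pv_pos by (simp add: m_def divide_right_mono)
      then show "(\<Sum>z\<in>other_nbrs v u. pv * pe * xval \<sigma> {v, z}) \<le> (1 + eps) * m / pv"
        using sum_nbr_xval_le[OF uv_E, of \<sigma>] by linarith
    qed (use eps_pos \<open>0 < b\<close> in simp)
    finally show ?thesis .
  qed
  have K_ge: "10 * lg / eps\<^sup>2 \<le> K"
    unfolding K_def m_def b_def by (rule load_scale_ge)
  have "measure_pmf.expectation \<rho> (\<lambda>H. of_bool ({v, u} \<in> snd H \<and> (1 + 3 * eps) * m < pv * xtv \<sigma> H v))
        \<le> exp (lam * b - lam * ((1 + 3 * eps) * m) / pv) * (c * (\<Prod>z\<in>other_nbrs v u. 1 + a z))"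
    using load_tail_le_product[OF uv_E assms(2) \<open>0 \<le> lam\<close>] by (simp add: a_def b_def)
  also have "\<dots> \<le> exp (lam * b - lam * ((1 + 3 * eps) * m) / pv) * (c * exp (\<Sum>z\<in>other_nbrs v u. a z))"
    using prod_one_plus_le_exp_sum[of "other_nbrs v u" a] finite_other_nbrs a_nonneg c_pos
    by (intro mult_left_mono) auto
  also have "\<dots> = c * exp (lam * b - lam * ((1 + 3 * eps) * m) / pv + (\<Sum>z\<in>other_nbrs v u. a z))"
    by (simp add: exp_add)
  also have "\<dots> \<le> c * exp (eps/2 + K * ((exp (eps/2) - 1) * (1 + eps) - eps/2 * (1 + 3 * eps)))"
  proof -
    have "lam * b - lam * ((1 + 3 * eps) * m) / pv + (exp (eps/2) - 1) / b * ((1 + eps) * m / pv)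
          = eps/2 + K * ((exp (eps/2) - 1) * (1 + eps) - eps/2 * (1 + 3 * eps))"
      unfolding K_def lam_def using \<open>0 < b\<close> pv_pos by (simp add: field_simps)
    then show ?thesis using sum_a c_pos by (simp add: mult_left_mono)
  qed
  also have "\<dots> \<le> c * eps"
    using exp_load_exponent_le[OF eps_pos eps_le_half K_ge] c_pos by (simp add: mult_left_mono)
  finally show ?thesis by (simp add: m_def)
qed

lemma expectation_edge_realized:
  assumes "e \<in> E"
  shows "measure_pmf.expectation \<rho> (\<lambda>H. of_bool (e \<in> snd H)) = c"
proof -
  obtain a b where ab: "a \<in> V" "b \<in> V" "a \<noteq> b" "e = {a, b}" using edge_E[OF assms] by blast
  have "measure_pmf.expectation \<rho> (\<lambda>H. of_bool (e \<in> snd H)) =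
        measure_pmf.expectation (pair_pmf CV CE) (\<lambda>x. (\<Prod>z\<in>{a, b}. of_bool (fst x (id z))) * of_bool (snd x e) :: real)"
    unfolding realization_eq integral_map_pmf using assms ab
    by (simp add: case_prod_beta of_bool_conj mult.assoc)
  also have "\<dots> = measure_pmf.expectation CV (\<lambda>cv. \<Prod>z\<in>{a, b}. of_bool (cv (id z))) *
                  measure_pmf.expectation CE (\<lambda>ce. of_bool (ce e))"
    by (rule expectation_pair_pmf_mult[where B=1 and B'=1]) (auto intro!: prod_nonneg prod_le_1)
  also have "measure_pmf.expectation CV (\<lambda>cv. \<Prod>z\<in>{a, b}. of_bool (cv (id z))) = pv * pv"
    using ab finite_V pv_pos pv_le_1
    by (subst expectation_Pi_pmf_prod_reindex) auto
  also have "measure_pmf.expectation CE (\<lambda>ce. of_bool (ce e)) = pe"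
  proof -
    have "measure_pmf.expectation CE (\<lambda>ce. of_bool (ce e)) =
          measure_pmf.expectation (map_pmf (\<lambda>ce. ce e) CE) (of_bool :: bool \<Rightarrow> real)"
      by simp
    also have "map_pmf (\<lambda>ce. ce e) CE = bernoulli_pmf pe"
      using finite_E assms by (subst Pi_pmf_component) auto
    finally show ?thesis using pe_pos pe_le_1 by simp
  qed
  finally show ?thesis by (simp add: power2_eq_square)
qed

lemma expectation_joint_realized:
  assumes "e \<in> E" "\<And>\<sigma>. 0 \<le> g \<sigma>" "\<And>\<sigma>. g \<sigma> \<le> B"
  shows "measure_pmf.expectation joint (\<lambda>x. g (fst x) * of_bool (e \<in> snd (snd x))) =
         measure_pmf.expectation S g * c"
  using expectation_pair_pmf_mult[of g B "\<lambda>H. of_bool (e \<in> snd H)" 1 S \<rho>] assms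
  by (simp add: expectation_edge_realized)

lemma scale_ge:
  assumes "e \<in> E" "s \<le> 1"
    and "\<And>v. v \<in> e \<Longrightarrow> 0 < xtv \<sigma> H v \<Longrightarrow> s \<le> cap v / (pv * xtv \<sigma> H v)"
  shows "s \<le> scale Alg eps pv pe V E \<sigma> H e"
proof -
  have "finite e" using edge_E[OF assms(1)] by auto
  then show ?thesis
    unfolding scale_def using assms(2,3) by (subst Min_ge_iff) auto
qed

lemma scale_bounds:
  assumes "e \<in> E"
  shows "0 \<le> scale Alg eps pv pe V E \<sigma> H e" "scale Alg eps pv pe V E \<sigma> H e \<le> 1"
proof -
  have "finite e" using edge_E[OF assms] by auto
  then show "scale Alg eps pv pe V E \<sigma> H e \<le> 1"
    unfolding scale_def by (intro Min_le) auto
  show "0 \<le> scale Alg eps pv pe V E \<sigma> H e"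
    using eps_pos pv_pos by (intro scale_ge[OF assms]) (auto intro!: divide_nonneg_pos)
qed

lemma xfrac_bounds: "0 \<le> xf \<sigma> H e" "xf \<sigma> H e \<le> xmax"
proof (atomize (full), cases "e \<in> E")
  case True
  have "xtilde Alg eps pv pe V E \<sigma> H e \<le> xmax"
    using xval_le[of \<sigma> e] tau_pos c_pos by (simp add: xtilde_eq)
  then have "scale Alg eps pv pe V E \<sigma> H e * xtilde Alg eps pv pe V E \<sigma> H e \<le> 1 * xmax"
    using scale_bounds[OF True] xtilde_nonneg by (intro mult_mono) auto
  then show "0 \<le> xf \<sigma> H e \<and> xf \<sigma> H e \<le> xmax"
    using scale_bounds[OF True] xtilde_nonneg by (simp add: xfrac_def)
next
  case False
  then have "xtilde Alg eps pv pe V E \<sigma> H e = 0" using N_subset_E by (auto simp: xtilde_def)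
  then show "0 \<le> xf \<sigma> H e \<and> xf \<sigma> H e \<le> xmax"
    using tau_pos c_pos by (simp add: xfrac_def)
qed

lemma freq_pos_in_EQ:
  assumes "0 < fr \<sigma> e"
  shows "e \<in> EQ Alg eps pv pe \<sigma>"
proof -
  have "{r \<in> {..<R}. e \<in> Alg (\<sigma> r)} \<noteq> {}"
  proof
    assume "{r \<in> {..<R}. e \<in> Alg (\<sigma> r)} = {}"
    then have "fr \<sigma> e = 0" unfolding freq_def by (simp only: card.empty)
    with assms show False by simp
  qed
  then show ?thesis by (auto simp: EQ_def)
qed

text \<open>On the good event no vertex constraint of step (2) scales \<open>{v, u}\<close> down by more than
  a factor \<open>1 + 3 eps\<close>, and \<open>x\<^sub>e\<close> is not truncated by the minimum in step (1).\<close>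

definition good :: "'a \<Rightarrow> 'a \<Rightarrow> (nat \<Rightarrow> 'a realz) \<Rightarrow> 'a realz \<Rightarrow> bool" where
  "good v u \<sigma> H \<longleftrightarrow> fr \<sigma> {v, u} \<le> 2 * \<tau> \<and>
     pv * xtv \<sigma> H v \<le> (1 + 3 * eps) * cap v \<and> pv * xtv \<sigma> H u \<le> (1 + 3 * eps) * cap u"

lemma xfrac_ge_if_good:
  assumes "{v, u} \<in> N"
  shows "(1 - 3 * eps) * (of_bool ({v, u} \<in> snd H \<and> good v u \<sigma> H) * fr \<sigma> {v, u} / c) \<le> xf \<sigma> H {v, u}"
proof (cases "{v, u} \<in> snd H \<and> good v u \<sigma> H \<and> 0 < fr \<sigma> {v, u}")
  case True
  have "{v, u} \<in> E" using assms N_subset_E by auto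
  have xtilde: "xtilde Alg eps pv pe V E \<sigma> H {v, u} = fr \<sigma> {v, u} / c"
    using True assms freq_pos_in_EQ c_pos
    by (auto simp: xtilde_def good_def min_def divide_right_mono)
  have "1 / (1 + 3 * eps) \<le> scale Alg eps pv pe V E \<sigma> H {v, u}"
  proof (rule scale_ge[OF \<open>{v, u} \<in> E\<close>])
    fix x assume x: "x \<in> {v, u}" "0 < xtv \<sigma> H x"
    have "pv * xtv \<sigma> H x \<le> (1 + 3 * eps) * cap x" using x(1) True by (auto simp: good_def)
    moreover have "0 < cap x" "0 < pv * xtv \<sigma> H x" using eps_pos pv_pos x(2) by auto
    ultimately show "1 / (1 + 3 * eps) \<le> cap x / (pv * xtv \<sigma> H x)"
      using eps_pos by (simp add: field_simps)
  qed (use eps_pos in simp)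
  moreover have "1 - 3 * eps \<le> 1 / (1 + 3 * eps)"
    using eps_pos by (simp add: field_simps algebra_simps)
  ultimately have "(1 - 3 * eps) * (fr \<sigma> {v, u} / c) \<le> scale Alg eps pv pe V E \<sigma> H {v, u} * (fr \<sigma> {v, u} / c)"
    using fr_bounds(1)[of \<sigma> "{v, u}"] c_pos by (intro mult_right_mono) auto
  then show ?thesis using True by (simp add: xfrac_def xtilde)
next
  case False
  then have "of_bool ({v, u} \<in> snd H \<and> good v u \<sigma> H) * fr \<sigma> {v, u} = 0"
    using fr_bounds(1)[of \<sigma> "{v, u}"] by auto
  then show ?thesis using xfrac_bounds(1) by simp
qed

definition load_excess :: "'a \<Rightarrow> 'a \<Rightarrow> (nat \<Rightarrow> 'a realz) \<Rightarrow> 'a realz \<Rightarrow> real" where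
  "load_excess v u \<sigma> H = of_bool (freq_N_at \<sigma> v \<le> (1 + eps) * cap v \<and> {v, u} \<in> snd H \<and>
                                   (1 + 3 * eps) * cap v < pv * xtv \<sigma> H v)"

definition bad_weight :: "'a \<Rightarrow> 'a \<Rightarrow> (nat \<Rightarrow> 'a realz) \<Rightarrow> 'a realz \<Rightarrow> real" where
  "bad_weight v u \<sigma> H =
     of_bool ({v, u} \<in> snd H) * (of_bool (2 * \<tau> < fr \<sigma> {v, u}) +
       of_bool ((1 + eps) * cap v < freq_N_at \<sigma> v) + of_bool ((1 + eps) * cap u < freq_N_at \<sigma> u))
     + load_excess v u \<sigma> H + load_excess u v \<sigma> H"

lemma bad_weight_bounds: "0 \<le> bad_weight v u \<sigma> H" "bad_weight v u \<sigma> H \<le> 5"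
  by (auto simp: bad_weight_def load_excess_def)

lemma one_le_bad_weight:
  assumes "{v, u} \<in> snd H" "\<not> good v u \<sigma> H"
  shows "1 \<le> bad_weight v u \<sigma> H"
  using assms by (auto simp: bad_weight_def load_excess_def good_def insert_commute)

lemma expectation_load_excess:
  assumes "{v, u} \<in> N" "v \<noteq> u" "r < R"
  shows "measure_pmf.expectation joint (\<lambda>x. matched {v, u} (fst x r) * load_excess v u (fst x) (snd x))
         \<le> c * eps * q {v, u}"
proof -
  have inner: "measure_pmf.expectation \<rho> (load_excess v u \<sigma>) \<le> c * eps" for \<sigma>
  proof (cases "freq_N_at \<sigma> v \<le> (1 + eps) * cap v")
    case True
    then have "load_excess v u \<sigma> = (\<lambda>H. of_bool ({v, u} \<in> snd H \<and> (1 + 3 * eps) * cap v < pv * xtv \<sigma> H v))"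
      by (simp add: load_excess_def fun_eq_iff)
    then show ?thesis
      using load_tail_bound[OF assms(1,2) True] by simp
  next
    case False
    then have "load_excess v u \<sigma> = (\<lambda>_. 0)"
      by (simp add: load_excess_def fun_eq_iff)
    then show ?thesis using c_pos eps_pos by simp
  qed
  have "measure_pmf.expectation joint (\<lambda>x. matched {v, u} (fst x r) * load_excess v u (fst x) (snd x))
        = measure_pmf.expectation S (\<lambda>\<sigma>. matched {v, u} (\<sigma> r) * measure_pmf.expectation \<rho> (load_excess v u \<sigma>))"
    by (subst expectation_pair_pmf_iterated[where B=1]) (auto simp: load_excess_def[abs_def])
  also have "\<dots> \<le> measure_pmf.expectation S (\<lambda>\<sigma>. matched {v, u} (\<sigma> r) * (c * eps))"
    using inner by (intro integral_mono integrable_samples mult_left_mono) auto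
  also have "\<dots> = c * eps * q {v, u}"
    using expectation_samples_component[OF assms(3), of "matched {v, u}"]
    by (simp add: expectation_matched)
  finally show ?thesis .
qed

lemma expectation_matched_bad_weight:
  assumes "{v, u} \<in> N" "v \<noteq> u" "r < R"
  shows "measure_pmf.expectation joint (\<lambda>x. matched {v, u} (fst x r) * bad_weight v u (fst x) (snd x))
         \<le> 5 * (c * eps * q {v, u})"
proof -
  let ?e = "{v, u}"
  have "?e \<in> E" using assms(1) N_subset_E by auto
  define f1 where "f1 = (\<lambda>\<sigma>. matched ?e (\<sigma> r) * of_bool (2 * \<tau> < fr \<sigma> ?e))"
  define f2 where "f2 = (\<lambda>x \<sigma>. matched ?e (\<sigma> r) * of_bool ((1 + eps) * cap x < freq_N_at \<sigma> x))"
  have realized: "measure_pmf.expectation joint (\<lambda>x. f (fst x) * of_bool (?e \<in> snd (snd x)))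
                  \<le> c * eps * q ?e"
    if "\<And>\<sigma>. 0 \<le> f \<sigma>" "\<And>\<sigma>. f \<sigma> \<le> 1" "measure_pmf.expectation S f \<le> eps * q ?e" for f
  proof -
    have "measure_pmf.expectation joint (\<lambda>x. f (fst x) * of_bool (?e \<in> snd (snd x))) =
          measure_pmf.expectation S f * c"
      by (rule expectation_joint_realized[OF \<open>?e \<in> E\<close> that(1,2)])
    also have "\<dots> \<le> eps * q ?e * c"
      using that(3) c_pos by (intro mult_right_mono) auto
    finally show ?thesis by (simp add: mult_ac)
  qed
  have "measure_pmf.expectation joint (\<lambda>x. f1 (fst x) * of_bool (?e \<in> snd (snd x))) \<le> c * eps * q ?e"
    by (rule realized) (use freq_excess_bound[OF assms(1,3)] in \<open>auto simp: f1_def\<close>)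
  moreover have f2_bound: "measure_pmf.expectation joint (\<lambda>x. f2 x' (fst x) * of_bool (?e \<in> snd (snd x)))
                 \<le> c * eps * q ?e" for x'
    by (rule realized) (use freq_N_at_excess_bound[OF assms(3)] in \<open>auto simp: f2_def\<close>)
  moreover have "measure_pmf.expectation joint (\<lambda>x. matched ?e (fst x r) * load_excess u v (fst x) (snd x))
                 \<le> c * eps * q ?e"
    using expectation_load_excess[of u v r] assms by (simp add: insert_commute)
  moreover have "measure_pmf.expectation joint (\<lambda>x. matched ?e (fst x r) * bad_weight v u (fst x) (snd x)) =
          measure_pmf.expectation joint (\<lambda>x. f1 (fst x) * of_bool (?e \<in> snd (snd x)))
        + measure_pmf.expectation joint (\<lambda>x. f2 v (fst x) * of_bool (?e \<in> snd (snd x)))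
        + measure_pmf.expectation joint (\<lambda>x. f2 u (fst x) * of_bool (?e \<in> snd (snd x)))
        + measure_pmf.expectation joint (\<lambda>x. matched ?e (fst x r) * load_excess v u (fst x) (snd x))
        + measure_pmf.expectation joint (\<lambda>x. matched ?e (fst x r) * load_excess u v (fst x) (snd x))"
    by (simp add: bad_weight_def f1_def f2_def algebra_simps)
  ultimately show ?thesis
    using expectation_load_excess[OF assms] f2_bound[of v] f2_bound[of u] by linarith
qed

text \<open>Union bound: every round in which the realized edge \<open>{v, u}\<close> is matched while the good event
  fails is charged to one of the five bad events collected in \<open>bad_weight\<close>.\<close>

lemma realized_freq_le_good_plus_bad:
  "of_bool ({v, u} \<in> snd H) * fr \<sigma> {v, u}
   \<le> of_bool ({v, u} \<in> snd H \<and> good v u \<sigma> H) * fr \<sigma> {v, u}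
      + (\<Sum>r<R. matched {v, u} (\<sigma> r) * bad_weight v u \<sigma> H) / R"
proof -
  have "0 \<le> (\<Sum>r<R. matched {v, u} (\<sigma> r) * bad_weight v u \<sigma> H) / R"
    using bad_weight_bounds(1)[of v u \<sigma> H] by (auto intro!: sum_nonneg divide_nonneg_nonneg)
  moreover have "fr \<sigma> {v, u} \<le> (\<Sum>r<R. matched {v, u} (\<sigma> r) * bad_weight v u \<sigma> H) / R"
    if "{v, u} \<in> snd H" "\<not> good v u \<sigma> H"
  proof -
    have "(\<Sum>r<R. matched {v, u} (\<sigma> r)) \<le> (\<Sum>r<R. matched {v, u} (\<sigma> r) * bad_weight v u \<sigma> H)"
      using one_le_bad_weight[OF that] mult_left_mono[of 1 "bad_weight v u \<sigma> H"]
      by (intro sum_mono) simp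
    then show ?thesis
      unfolding fr_eq_sum using rounds_ge_1 by (intro divide_right_mono) auto
  qed
  ultimately show ?thesis
    by (cases "{v, u} \<in> snd H"; cases "good v u \<sigma> H") auto
qed

lemma expectation_good_ge:
  assumes "{v, u} \<in> N" "v \<noteq> u"
  shows "(1 - 5 * eps) * q {v, u} \<le>
         measure_pmf.expectation joint
           (\<lambda>x. of_bool ({v, u} \<in> snd (snd x) \<and> good v u (fst x) (snd x)) * fr (fst x) {v, u} / c)"
proof -
  let ?e = "{v, u}"
  have "?e \<in> E" using assms(1) N_subset_E by auto
  define loss where
    "loss = (\<lambda>x. (\<Sum>r<R. matched ?e (fst x r) * bad_weight v u (fst x) (snd x)) / R / c)"
  have "measure_pmf.expectation joint (\<lambda>x. fr (fst x) ?e * of_bool (?e \<in> snd (snd x))) = q ?e * c"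
    using expectation_joint_realized[OF \<open>?e \<in> E\<close>, of "\<lambda>\<sigma>. fr \<sigma> ?e" 1] fr_bounds
    by (simp add: expectation_fr)
  then have realized: "measure_pmf.expectation joint (\<lambda>x. of_bool (?e \<in> snd (snd x)) * fr (fst x) ?e / c) = q ?e"
    using pv_pos pe_pos by (simp add: mult.commute)
  have "measure_pmf.expectation joint loss
        = (\<Sum>r<R. measure_pmf.expectation joint (\<lambda>x. matched ?e (fst x r) * bad_weight v u (fst x) (snd x))) / R / c"
    by (simp add: loss_def)
  also have "\<dots> \<le> (\<Sum>r<R. 5 * (c * eps * q ?e)) / R / c"
    using expectation_matched_bad_weight[OF assms] c_pos
    by (intro divide_right_mono sum_mono) auto
  also have "\<dots> = 5 * eps * q ?e"
    using pv_pos pe_pos rounds_ge_1 by simp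
  finally have "measure_pmf.expectation joint loss \<le> 5 * eps * q ?e" .
  moreover have "measure_pmf.expectation joint (\<lambda>x. of_bool (?e \<in> snd (snd x)) * fr (fst x) ?e / c - loss x)
      \<le> measure_pmf.expectation joint (\<lambda>x. of_bool (?e \<in> snd (snd x) \<and> good v u (fst x) (snd x)) * fr (fst x) ?e / c)"
  proof (intro expectation_mono_joint)
    fix x :: "(nat \<Rightarrow> 'a realz) \<times> 'a realz"
    show "of_bool (?e \<in> snd (snd x)) * fr (fst x) ?e / c - loss x
          \<le> of_bool (?e \<in> snd (snd x) \<and> good v u (fst x) (snd x)) * fr (fst x) ?e / c"
      using divide_right_mono[OF realized_freq_le_good_plus_bad[where v=v and u=u and H="snd x" and \<sigma>="fst x"], of c]
        c_pos unfolding loss_def add_divide_distrib by linarith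
  qed
  ultimately show ?thesis using realized by (simp add: algebra_simps)
qed

lemma expectation_xfrac_ge:
  assumes "e \<in> N"
  shows "(1 - 10 * eps) * q e \<le> measure_pmf.expectation joint (\<lambda>x. xf (fst x) (snd x) e)"
proof (cases "eps \<le> 1/10")
  case False
  have "(1 - 10 * eps) * q e \<le> 0" using False q_nonneg[of e] by (intro mult_nonpos_nonneg) auto
  also have "\<dots> \<le> measure_pmf.expectation joint (\<lambda>x. xf (fst x) (snd x) e)"
    by (intro Bochner_Integration.integral_nonneg xfrac_bounds)
  finally show ?thesis .
next
  case True
  obtain v u where "v \<noteq> u" "e = {v, u}" using edge_E assms N_subset_E by blast
  have "(1 - 10 * eps) * q e \<le> (1 - 3 * eps) * ((1 - 5 * eps) * q e)"
    using eps_pos q_nonneg[of e] by (simp add: algebra_simps power2_eq_square)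
  also have "\<dots> \<le> (1 - 3 * eps) * measure_pmf.expectation joint
           (\<lambda>x. of_bool (e \<in> snd (snd x) \<and> good v u (fst x) (snd x)) * fr (fst x) e / c)"
    using expectation_good_ge[OF assms[unfolded \<open>e = {v, u}\<close>] \<open>v \<noteq> u\<close>] True \<open>e = {v, u}\<close>
    by (intro mult_left_mono) auto
  also have "\<dots> = measure_pmf.expectation joint
           (\<lambda>x. (1 - 3 * eps) * (of_bool (e \<in> snd (snd x) \<and> good v u (fst x) (snd x)) * fr (fst x) e / c))"
    by simp
  also have "\<dots> \<le> measure_pmf.expectation joint (\<lambda>x. xf (fst x) (snd x) e)"
    using xfrac_ge_if_good assms \<open>e = {v, u}\<close> by (intro expectation_mono_joint) auto
  finally show ?thesis .
qed

lemma expectation_weighted_xfrac_ge: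
  assumes "\<And>e. e \<in> E \<Longrightarrow> 0 \<le> w e"
  shows "(1 - 10 * eps) * phi w Alg pv pe V E N \<le>
         measure_pmf.expectation joint (\<lambda>(\<sigma>, H). \<Sum>e\<in>N. w e * xf \<sigma> H e)"
proof -
  have "(1 - 10 * eps) * phi w Alg pv pe V E N = (\<Sum>e\<in>N. w e * ((1 - 10 * eps) * q e))"
    by (simp add: phi_def sum_distrib_left mult_ac)
  also have "\<dots> \<le> (\<Sum>e\<in>N. w e * measure_pmf.expectation joint (\<lambda>x. xf (fst x) (snd x) e))"
    using assms N_subset_E expectation_xfrac_ge by (intro sum_mono mult_left_mono) auto
  also have "\<dots> = measure_pmf.expectation joint (\<lambda>(\<sigma>, H). \<Sum>e\<in>N. w e * xf \<sigma> H e)"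
    unfolding case_prod_beta by (subst Bochner_Integration.integral_sum) auto
  finally show ?thesis .
qed

end

theorem mainTheorem9:
  fixes V :: "'a set" and E :: "'a set set" and w :: "'a set \<Rightarrow> real"
    and Alg :: "'a set \<times> 'a set set \<Rightarrow> 'a set set"
    and eps pv pe :: real
  assumes "0 < eps" and "eps \<le> 1 / exp 1"
    and "0 < pv" and "pv \<le> 1" and "0 < pe" and "pe \<le> 1"
    and "simple_graph V E"
    and "\<And>e. e \<in> E \<Longrightarrow> w e \<ge> 0"
    and "\<And>H. H \<in> set_pmf (realization pv pe V E) \<Longrightarrow> is_max_weight_matching w H (Alg H)"
  shows "measure_pmf.expectation (pair_pmf (samples eps pv pe V E) (realization pv pe V E))
           (\<lambda>(\<sigma>, H). \<Sum>e\<in>Nset Alg eps pv pe V E. w e * xfrac Alg eps pv pe V E \<sigma> H e)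
         \<ge> (1 - 10 * eps) * phi w Alg pv pe V E (Nset Alg eps pv pe V E)"
proof -
  interpret noncrucial_setting V E w Alg eps pv pe
    by unfold_locales (use assms in auto)
  show ?thesis
    using expectation_weighted_xfrac_ge assms(8) by simp
qed

end
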